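(* Let $R\in\mathcal C_{K_0}$ and write $R=X^\dagger QX$ with $Q,X\in\mathcal A'_G$, $Q\ge0$, $\operatorname{Rng}(X)=\operatorname{Supp}(Q)$. Then an operator $T$ on $\mathcal K\otimes\mathcal H$ is a perturbation of $R$ in $\mathcal C_{K_0}$ if and only if $T$ is a Hermitian element of $\mathcal A'_G$ with $\operatorname{Tr}_{\mathcal K}[T]=0$ and $T=X^\dagger OX$ for some nonzero Hermitian $O\in\mathcal A'_G$ with $\operatorname{Supp}(O)\subseteq\operatorname{Rng}(X)$. Writing $Q=\bigoplus_k(I_{\mathcal H_k}\otimes Q_k)$ and $X=\bigoplus_k(I_{\mathcal H_k}\otimes X_k)$, such $O$ has the form $O=\bigoplus_k(I_{\mathcal H_k}\otimes O_k)$ with $\operatorname{Supp}(O_k)\subseteq\operatorname{Rng}(X_k)$ for all $k$.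
   Context: Let $\mathcal H,\mathcal K$ be finite-dimensional Hilbert spaces and $g\mapsto U_g$, $g\mapsto V_g$ unitary representations of a group $G$ on $\mathcal H$ and $\mathcal K$. $U_g^*$ is the complex conjugate in a fixed orthonormal basis. Decompose $\mathcal K\otimes\mathcal H=\bigoplus_k(\mathcal H_k\otimes\mathbb C^{m_k})$ according to the equivalence classes $k$ of irreducible components of $V_g\otimes U_g^*$ (irreducible space $\mathcal H_k$, multiplicity $m_k$). The commutant $\mathcal A'_G$ of $\{V_g\otimes U_g^*\}$ consists of the operators $\bigoplus_k(I_{\mathcal H_k}\otimes M_k)$, $M_k\in\mathcal B(\mathbb C^{m_k})$. CP maps (quantum operations) $\mathcal M$ covariant in the sense $\mathcal M^*(U_g\rho U_g^\dagger)=V_g\mathcal M^*(\rho)V_g^\dagger$ correspond bijectively to operators $R\ge0$ in $\mathcal A'_G$ via $R=(\mathcal M^*\otimes\mathcal I)(|I\rangle\langle I|)$, $|I\rangle=\sum_n|n\rangle\otimes|n\rangle$. Fix an operator $K_0$ on $\mathcal H$ with $0\le K_0\le I_{\mathcal H}$ and let $\mathcal C_{K_0}=\{R\in\mathcal A'_G: R\ge0,\ \operatorname{Tr}_{\mathcal K}[R]=K_0\}$, a convex set. A nonzero $T$ is a perturbation of $R\in\mathcal C_{K_0}$ if $R\pm tT\in\mathcal C_{K_0}$ for some $t>0$; $R$ is extremal iff it has no perturbation. $\operatorname{Supp}(O)=\operatorname{Ker}(O)^\perp$, $\operatorname{Rng}$ denotes range. *)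

theory Defs
  imports "HOL-Algebra.Group" "Jordan_Normal_Form.Jordan_Normal_Form" "Jordan_Normal_Form.Schur_Decomposition"
begin

text \<open>Finite-dimensional Hilbert spaces are modelled as coordinate spaces
  (complex vectors of fixed dimension), operators as complex square matrices.
  Tensor products are Kronecker products; on K (x) H the index (i,n) with
  i < dK, n < dH is encoded as i * dH + n.\<close>

definition kron :: "complex mat \<Rightarrow> complex mat \<Rightarrow> complex mat" where
  "kron A B = mat (dim_row A * dim_row B) (dim_col A * dim_col B)
     (\<lambda>(r, c). A $$ (r div dim_row B, c div dim_col B) * B $$ (r mod dim_row B, c mod dim_col B))"

definition cconj :: "complex mat \<Rightarrow> complex mat" where
  "cconj A = map_mat cnj A"

abbreviation adj :: "complex mat \<Rightarrow> complex mat" where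
  "adj A \<equiv> mat_adjoint A"

definition hermitian_mat :: "nat \<Rightarrow> complex mat \<Rightarrow> bool" where
  "hermitian_mat n A \<longleftrightarrow> A \<in> carrier_mat n n \<and> adj A = A"

definition unitary_mat :: "nat \<Rightarrow> complex mat \<Rightarrow> bool" where
  "unitary_mat n A \<longleftrightarrow> A \<in> carrier_mat n n \<and> adj A * A = 1\<^sub>m n \<and> A * adj A = 1\<^sub>m n"

definition psd :: "nat \<Rightarrow> complex mat \<Rightarrow> bool" where
  "psd n A \<longleftrightarrow> hermitian_mat n A \<and> (\<forall>v \<in> carrier_vec n. 0 \<le> Re (scalar_prod (A *\<^sub>v v) (conjugate v)))"

definition unitary_rep :: "('g, 'b) monoid_scheme \<Rightarrow> nat \<Rightarrow> ('g \<Rightarrow> complex mat) \<Rightarrow> bool" where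
  "unitary_rep G n U \<longleftrightarrow>
     (\<forall>g \<in> carrier G. unitary_mat n (U g)) \<and>
     (\<forall>g \<in> carrier G. \<forall>h \<in> carrier G. U (g \<otimes>\<^bsub>G\<^esub> h) = U g * U h)"

definition commutant :: "('g, 'b) monoid_scheme \<Rightarrow> nat \<Rightarrow> nat \<Rightarrow> ('g \<Rightarrow> complex mat)
    \<Rightarrow> ('g \<Rightarrow> complex mat) \<Rightarrow> complex mat set" where
  "commutant G dK dH V U = {R \<in> carrier_mat (dK * dH) (dK * dH).
     \<forall>g \<in> carrier G. kron (V g) (cconj (U g)) * R = R * kron (V g) (cconj (U g))}"

definition ptrace_K :: "nat \<Rightarrow> nat \<Rightarrow> complex mat \<Rightarrow> complex mat" where
  "ptrace_K dK dH R = mat dH dH (\<lambda>(n, n'). \<Sum>i<dK. R $$ (i * dH + n, i * dH + n'))"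

definition C_set :: "('g, 'b) monoid_scheme \<Rightarrow> nat \<Rightarrow> nat \<Rightarrow> ('g \<Rightarrow> complex mat)
    \<Rightarrow> ('g \<Rightarrow> complex mat) \<Rightarrow> complex mat \<Rightarrow> complex mat set" where
  "C_set G dK dH V U K0 = {R \<in> commutant G dK dH V U. psd (dK * dH) R \<and> ptrace_K dK dH R = K0}"

definition perturbation :: "complex mat set \<Rightarrow> complex mat \<Rightarrow> complex mat \<Rightarrow> bool" where
  "perturbation C R T \<longleftrightarrow> T \<noteq> 0\<^sub>m (dim_row T) (dim_col T) \<and>
     (\<exists>t::real. t > 0 \<and> R + complex_of_real t \<cdot>\<^sub>m T \<in> C \<and> R - complex_of_real t \<cdot>\<^sub>m T \<in> C)"

definition ker_mat :: "nat \<Rightarrow> complex mat \<Rightarrow> complex vec set" where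
  "ker_mat n A = {v \<in> carrier_vec n. A *\<^sub>v v = 0\<^sub>v (dim_row A)}"

definition supp_mat :: "nat \<Rightarrow> complex mat \<Rightarrow> complex vec set" where
  "supp_mat n A = {w \<in> carrier_vec n. \<forall>v \<in> ker_mat n A. scalar_prod w (conjugate v) = 0}"

definition rng_mat :: "nat \<Rightarrow> complex mat \<Rightarrow> complex vec set" where
  "rng_mat n A = {A *\<^sub>v v | v. v \<in> carrier_vec n}"

definition subspace_vec :: "nat \<Rightarrow> complex vec set \<Rightarrow> bool" where
  "subspace_vec n S \<longleftrightarrow> S \<subseteq> carrier_vec n \<and> 0\<^sub>v n \<in> S \<and>
     (\<forall>v \<in> S. \<forall>w \<in> S. v + w \<in> S) \<and> (\<forall>c. \<forall>v \<in> S. c \<cdot>\<^sub>v v \<in> S)"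

definition irreducible_rep :: "('g, 'b) monoid_scheme \<Rightarrow> nat \<Rightarrow> ('g \<Rightarrow> complex mat) \<Rightarrow> bool" where
  "irreducible_rep G n P \<longleftrightarrow> n > 0 \<and> unitary_rep G n P \<and>
     (\<forall>S. subspace_vec n S \<and> (\<forall>g \<in> carrier G. \<forall>v \<in> S. P g *\<^sub>v v \<in> S)
        \<longrightarrow> S = {0\<^sub>v n} \<or> S = carrier_vec n)"

definition equivalent_rep :: "('g, 'b) monoid_scheme \<Rightarrow> nat \<Rightarrow> ('g \<Rightarrow> complex mat)
    \<Rightarrow> nat \<Rightarrow> ('g \<Rightarrow> complex mat) \<Rightarrow> bool" where
  "equivalent_rep G n P m P' \<longleftrightarrow> n = m \<and>
     (\<exists>M. unitary_mat n M \<and> (\<forall>g \<in> carrier G. P' g = adj M * P g * M))"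

text \<open>Block operator (+)_k (I_{H_k} (x) M_k) in the decomposed basis.\<close>
definition block_op :: "nat list \<Rightarrow> complex mat list \<Rightarrow> complex mat" where
  "block_op ds Ms = diag_block_mat (map (\<lambda>k. kron (1\<^sub>m (ds ! k)) (Ms ! k)) [0..<length ds])"

end

theory Submission
  imports Defs
begin

text \<open>A perturbation T of R keeps both R + t T and R - t T positive semidefinite, so T vanishes on
  the kernel of R, which contains the kernel of X. The commutant is a star algebra in which every
  Hermitian element has a generalized inverse (a polynomial in that element), and this turns the
  kernel inclusion into a factorization T = adj X * Op * X with Op in the commutant and supported on
  the range of X. Conversely, if Op is supported on Rng X = Supp Q then Op = Q B Q, so the form of Op
  is dominated by a multiple of the form of Q and R +/- t T stays positive for small t > 0; membership
  in the commutant and the partial trace condition are linear. The block form of Op is obtained by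
  compressing with the isometry that embeds one copy of C^(m_k) into the k-th isotypic block.\<close>

section \<open>Adjoints and positive semidefinite forms\<close>

lemma dim_mat_adjoint[simp]: "dim_row (adj A) = dim_col A" "dim_col (adj A) = dim_row A"
  unfolding mat_adjoint_def by auto

lemma index_mat_adjoint[simp]:
  "i < dim_col A \<Longrightarrow> j < dim_row A \<Longrightarrow> adj A $$ (i, j) = cnj (A $$ (j, i))"
  unfolding mat_adjoint_def by (auto simp: mat_of_rows_def)

lemma mat_adjoint_carrier[simp, intro]: "A \<in> carrier_mat n m \<Longrightarrow> adj A \<in> carrier_mat m n"
  unfolding carrier_mat_def by auto

lemma mat_adjoint_adjoint[simp]: "adj (adj A) = A"
  by (rule eq_matI) auto

lemma mult_carrier_mat_square[simp]:
  "A \<in> carrier_mat n n \<Longrightarrow> B \<in> carrier_mat n n \<Longrightarrow> A * B \<in> carrier_mat n n"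
  by (rule mult_carrier_mat)

lemma mat_adjoint_mult:
  assumes "A \<in> carrier_mat n m" "B \<in> carrier_mat m k"
  shows "adj (A * B) = adj B * adj A"
proof (rule eq_matI)
  fix i j assume i: "i < dim_row (adj B * adj A)" and j: "j < dim_col (adj B * adj A)"
  have "adj (A * B) $$ (i, j) = cnj (\<Sum>l<m. A $$ (j, l) * B $$ (l, i))"
    using assms i j by (simp add: scalar_prod_def lessThan_atLeast0)
  also have "\<dots> = (\<Sum>l<m. adj B $$ (i, l) * adj A $$ (l, j))"
    using assms i j by (simp add: cnj_sum mult.commute)
  also have "\<dots> = (adj B * adj A) $$ (i, j)"
    using assms i j by (simp add: scalar_prod_def lessThan_atLeast0)
  finally show "adj (A * B) $$ (i, j) = (adj B * adj A) $$ (i, j)" .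
qed (use assms in auto)

lemma mat_adjoint_add:
  "A \<in> carrier_mat n m \<Longrightarrow> B \<in> carrier_mat n m \<Longrightarrow> adj (A + B) = adj A + adj B"
  by (intro eq_matI) auto

lemma mat_adjoint_minus:
  "A \<in> carrier_mat n m \<Longrightarrow> B \<in> carrier_mat n m \<Longrightarrow> adj (A - B) = adj A - adj B"
  by (intro eq_matI) auto

lemma mat_adjoint_smult: "adj (c \<cdot>\<^sub>m A) = cnj c \<cdot>\<^sub>m adj A"
  by (intro eq_matI) auto

lemma mat_adjoint_sandwich:
  assumes "F \<in> carrier_mat n m" "B \<in> carrier_mat n n"
  shows "adj (adj F * B * F) = adj F * adj B * F"
proof -
  have "adj (adj F * B * F) = adj F * adj (adj F * B)" by (rule mat_adjoint_mult) (use assms in auto)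
  also have "adj (adj F * B) = adj B * F" using mat_adjoint_mult[of "adj F" m n B n] assms by simp
  finally show ?thesis using assms by (simp add: assoc_mult_mat[of _ m n _ n _ m])
qed

lemma cscalar_prod_adjoint:
  assumes A: "A \<in> carrier_mat n m" and v: "v \<in> carrier_vec m" and w: "w \<in> carrier_vec n"
  shows "(A *\<^sub>v v) \<bullet>c w = v \<bullet>c (adj A *\<^sub>v w)"
proof -
  have "(A *\<^sub>v v) \<bullet>c w = (\<Sum>i<n. \<Sum>j<m. A $$ (i, j) * v $ j * cnj (w $ i))"
    using A v w by (auto simp: scalar_prod_def row_def lessThan_atLeast0 sum_distrib_right)
  also have "\<dots> = (\<Sum>j<m. \<Sum>i<n. A $$ (i, j) * v $ j * cnj (w $ i))"
    by (rule sum.swap)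
  also have "\<dots> = v \<bullet>c (adj A *\<^sub>v w)"
    using A v w by (auto simp: scalar_prod_def row_def lessThan_atLeast0 cnj_sum sum_distrib_left
        mult.commute mult.left_commute intro!: sum.cong)
  finally show ?thesis .
qed

lemma cscalar_prod_swap: "(v :: complex vec) \<in> carrier_vec n \<Longrightarrow> w \<in> carrier_vec n \<Longrightarrow> w \<bullet>c v = cnj (v \<bullet>c w)"
  by (auto simp: scalar_prod_def cnj_sum intro!: sum.cong)

lemma cscalar_prod_minus_right:
  "(v :: complex vec) \<in> carrier_vec n \<Longrightarrow> w1 \<in> carrier_vec n \<Longrightarrow> w2 \<in> carrier_vec n \<Longrightarrow>
    v \<bullet>c (w1 - w2) = v \<bullet>c w1 - v \<bullet>c w2"
  by (auto simp: scalar_prod_def sum_subtractf right_diff_distrib)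

lemma cscalar_prod_smult_right:
  "(v :: complex vec) \<in> carrier_vec n \<Longrightarrow> w \<in> carrier_vec n \<Longrightarrow> v \<bullet>c (a \<cdot>\<^sub>v w) = cnj a * (v \<bullet>c w)"
  by (auto simp: scalar_prod_def sum_distrib_left algebra_simps)

lemma Re_cscalar_prod_self_nonneg: "0 \<le> Re ((v :: complex vec) \<bullet>c v)"
  using conjugate_square_ge_0_vec[of v] by (simp add: less_eq_complex_def)

lemma Re_cscalar_prod_self_eq_0:
  assumes "(v :: complex vec) \<in> carrier_vec n" "Re (v \<bullet>c v) = 0"
  shows "v = 0\<^sub>v n"
proof -
  have "Im (v \<bullet>c v) = 0"
    using conjugate_square_ge_0_vec[of v] by (simp add: less_eq_complex_def)
  with assms show ?thesis
    using conjugate_square_eq_0_vec[of v n] complex_eq_iff[of "v \<bullet>c v" 0] by simp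
qed

lemma smult_mult_mat_vec: "A \<in> carrier_mat n m \<Longrightarrow> v \<in> carrier_vec m \<Longrightarrow> (c \<cdot>\<^sub>m A) *\<^sub>v v = c \<cdot>\<^sub>v (A *\<^sub>v v)"
  by (rule eq_vecI) (auto simp: scalar_prod_def sum_distrib_left algebra_simps)

lemma zero_mult_mat_vec[simp]: "v \<in> carrier_vec m \<Longrightarrow> 0\<^sub>m n m *\<^sub>v v = 0\<^sub>v n"
  by (rule eq_vecI) (auto simp: scalar_prod_def)

lemma mult_mat_vec_zero[simp]: "A \<in> carrier_mat n m \<Longrightarrow> A *\<^sub>v 0\<^sub>v m = 0\<^sub>v n"
  by (rule eq_vecI) (auto simp: scalar_prod_def)

lemma smult_mat_eq_0_imp_eq_0:
  fixes X :: "'a :: field mat"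
  assumes X: "X \<in> carrier_mat n m" and c: "c \<noteq> 0" and z: "c \<cdot>\<^sub>m X = 0\<^sub>m n m"
  shows "X = 0\<^sub>m n m"
proof (rule eq_matI)
  fix i j assume ij: "i < dim_row (0\<^sub>m n m :: 'a mat)" "j < dim_col (0\<^sub>m n m :: 'a mat)"
  from arg_cong[OF z, of "\<lambda>M. M $$ (i, j)"] show "X $$ (i, j) = 0\<^sub>m n m $$ (i, j)" using X ij c by simp
qed (use X in auto)

lemma minus_mat_eq_0_imp_eq:
  fixes X Y :: "'a :: ab_group_add mat"
  assumes X: "X \<in> carrier_mat n m" and Y: "Y \<in> carrier_mat n m" and z: "X - Y = 0\<^sub>m n m"
  shows "X = Y"
proof (rule eq_matI)
  fix i j assume ij: "i < dim_row Y" "j < dim_col Y"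
  from arg_cong[OF z, of "\<lambda>M. M $$ (i, j)"] show "X $$ (i, j) = Y $$ (i, j)" using X Y ij by simp
qed (use X Y in auto)

lemma minus_vec_eq_0_imp_eq:
  fixes x y :: "'a :: ab_group_add vec"
  assumes x: "x \<in> carrier_vec n" and y: "y \<in> carrier_vec n" and z: "x - y = 0\<^sub>v n"
  shows "x = y"
proof (rule eq_vecI)
  fix i assume i: "i < dim_vec y"
  from arg_cong[OF z, of "\<lambda>v. v $ i"] show "x $ i = y $ i" using x y i by simp
qed (use x y in auto)

lemma mat_eq_by_mult_vec:
  fixes A B :: "complex mat"
  assumes A: "A \<in> carrier_mat n m" and B: "B \<in> carrier_mat n m"
    and eq: "\<And>v. v \<in> carrier_vec m \<Longrightarrow> A *\<^sub>v v = B *\<^sub>v v"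
  shows "A = B"
proof (rule eq_matI)
  fix i j assume i: "i < dim_row B" and j: "j < dim_col B"
  have "(A *\<^sub>v unit_vec m j) $ i = (B *\<^sub>v unit_vec m j) $ i" using eq[of "unit_vec m j"] by simp
  thus "A $$ (i, j) = B $$ (i, j)" using A B i j by (simp add: scalar_prod_right_unit)
qed (use A B in auto)

lemma mat_adjoint_mult_self_eq_0:
  fixes M :: "complex mat"
  assumes M: "M \<in> carrier_mat n m" and z: "adj M * M = 0\<^sub>m m m"
  shows "M = 0\<^sub>m n m"
proof (rule mat_eq_by_mult_vec[OF M])
  fix v :: "complex vec" assume v: "v \<in> carrier_vec m"
  have Mv: "M *\<^sub>v v \<in> carrier_vec n" using M v by auto
  have "(M *\<^sub>v v) \<bullet>c (M *\<^sub>v v) = v \<bullet>c ((adj M * M) *\<^sub>v v)"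
    using cscalar_prod_adjoint[OF M v Mv] assoc_mult_mat_vec[of "adj M" m n M m v] M v by simp
  also have "\<dots> = 0" using z v by simp
  finally show "M *\<^sub>v v = 0\<^sub>m n m *\<^sub>v v" using conjugate_square_eq_0_vec[OF Mv] v by simp
qed auto

lemma nonneg_quadratic_discriminant:
  fixes p q r :: real
  assumes nonneg: "\<And>s. 0 \<le> p - 2 * s * q + s^2 * r" and r: "0 \<le> r"
  shows "q^2 \<le> p * r"
proof (cases "r = 0")
  case True
  have "q = 0"
  proof (rule ccontr)
    assume q: "q \<noteq> 0"
    have "0 \<le> p - 2 * ((p + 1) / (2 * q)) * q + ((p + 1) / (2 * q))^2 * r" by (rule nonneg)
    also have "\<dots> = -1" using q True by (simp add: field_simps)
    finally show False by simp
  qed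
  thus ?thesis using True by simp
next
  case False
  hence r: "r > 0" using r by simp
  have "0 \<le> p - 2 * (q / r) * q + (q / r)^2 * r" by (rule nonneg)
  also have "\<dots> = p - q^2 / r" using r by (simp add: field_simps power2_eq_square)
  finally show ?thesis using r by (simp add: field_simps)
qed

lemma hermitian_form_diff:
  assumes A: "hermitian_mat n A" and u: "u \<in> carrier_vec n" and w: "w \<in> carrier_vec n"
  shows "Re ((A *\<^sub>v (u - complex_of_real s \<cdot>\<^sub>v w)) \<bullet>c (u - complex_of_real s \<cdot>\<^sub>v w))
     = Re ((A *\<^sub>v u) \<bullet>c u) - 2 * s * Re ((A *\<^sub>v u) \<bullet>c w) + s^2 * Re ((A *\<^sub>v w) \<bullet>c w)"
proof -
  have Ac: "A \<in> carrier_mat n n" and Aa: "adj A = A" using A unfolding hermitian_mat_def by auto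
  let ?c = "complex_of_real s"
  have Au: "A *\<^sub>v u \<in> carrier_vec n" and Aw: "A *\<^sub>v w \<in> carrier_vec n" using Ac u w by auto
  have "A *\<^sub>v (u - ?c \<cdot>\<^sub>v w) = A *\<^sub>v u - ?c \<cdot>\<^sub>v (A *\<^sub>v w)"
    using Ac u w by (simp add: mult_minus_distrib_mat_vec mult_mat_vec)
  hence "(A *\<^sub>v (u - ?c \<cdot>\<^sub>v w)) \<bullet>c (u - ?c \<cdot>\<^sub>v w)
     = (A *\<^sub>v u) \<bullet>c u - ?c * ((A *\<^sub>v u) \<bullet>c w) - ?c * ((A *\<^sub>v w) \<bullet>c u) + ?c * ?c * ((A *\<^sub>v w) \<bullet>c w)"
    using u w Au Aw
    by (simp add: minus_scalar_prod_distrib[of _ n] cscalar_prod_minus_right[of _ n]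
        cscalar_prod_smult_right[of _ n] algebra_simps)
  moreover have "(A *\<^sub>v w) \<bullet>c u = cnj ((A *\<^sub>v u) \<bullet>c w)"
    using cscalar_prod_adjoint[OF Ac w u] cscalar_prod_swap[OF Au w] Aa by simp
  ultimately show ?thesis by (simp add: power2_eq_square)
qed

lemma psd_cauchy_schwarz:
  assumes A: "psd n A" and u: "u \<in> carrier_vec n" and w: "w \<in> carrier_vec n"
  shows "(Re ((A *\<^sub>v u) \<bullet>c w))^2 \<le> Re ((A *\<^sub>v u) \<bullet>c u) * Re ((A *\<^sub>v w) \<bullet>c w)"
proof (rule nonneg_quadratic_discriminant)
  fix s :: real
  have "u - complex_of_real s \<cdot>\<^sub>v w \<in> carrier_vec n" using u w by simp
  hence "0 \<le> Re ((A *\<^sub>v (u - complex_of_real s \<cdot>\<^sub>v w)) \<bullet>c (u - complex_of_real s \<cdot>\<^sub>v w))"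
    using A unfolding psd_def by blast
  thus "0 \<le> Re ((A *\<^sub>v u) \<bullet>c u) - 2 * s * Re ((A *\<^sub>v u) \<bullet>c w) + s\<^sup>2 * Re ((A *\<^sub>v w) \<bullet>c w)"
    using hermitian_form_diff[of n A u w s] A u w unfolding psd_def by simp
qed (use A w in \<open>auto simp: psd_def\<close>)

lemma psd_form_eq_0_imp_kernel:
  assumes A: "psd n A" and v: "v \<in> carrier_vec n" and z: "Re ((A *\<^sub>v v) \<bullet>c v) = 0"
  shows "A *\<^sub>v v = 0\<^sub>v n"
proof -
  have Av: "A *\<^sub>v v \<in> carrier_vec n" using A v unfolding psd_def hermitian_mat_def by auto
  from psd_cauchy_schwarz[OF A v Av] z have "(Re ((A *\<^sub>v v) \<bullet>c (A *\<^sub>v v)))^2 \<le> 0" by simp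
  thus ?thesis using Re_cscalar_prod_self_eq_0[OF Av] by simp
qed

section \<open>Generalized inverses of Hermitian matrices\<close>

lemma hermitian_square_mult_eq_0:
  assumes A: "hermitian_mat n A" and C: "C \<in> carrier_mat n k" and z: "A * A * C = 0\<^sub>m n k"
  shows "A * C = 0\<^sub>m n k"
proof -
  have Ac: "A \<in> carrier_mat n n" and Aa: "adj A = A" using A unfolding hermitian_mat_def by auto
  have "adj (A * C) * (A * C) = adj C * (A * A * C)"
    using Ac C Aa by (simp add: mat_adjoint_mult[OF Ac C] assoc_mult_mat[of _ k n _ n _ k])
  also have "\<dots> = 0\<^sub>m k k" using z C by simp
  finally show ?thesis using mat_adjoint_mult_self_eq_0[of "A * C" n k] Ac C by auto
qed

lemma hermitian_pow_mult_eq_0: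
  assumes A: "hermitian_mat n A" and C: "C \<in> carrier_mat n k" and z: "A ^\<^sub>m j * C = 0\<^sub>m n k"
  shows "A * C = 0\<^sub>m n k"
  using C z
proof (induction j arbitrary: C)
  case 0
  hence "C = 0\<^sub>m n k" using A unfolding hermitian_mat_def by auto
  thus ?case using A unfolding hermitian_mat_def by auto
next
  case (Suc j)
  have Ac: "A \<in> carrier_mat n n" using A unfolding hermitian_mat_def by auto
  have "A ^\<^sub>m j * (A * C) = 0\<^sub>m n k"
    using Suc.prems Ac by (simp add: assoc_mult_mat[of _ n n A n C k])
  hence "A * (A * C) = 0\<^sub>m n k" using Suc.IH Ac Suc.prems(1) by simp
  hence "A * A * C = 0\<^sub>m n k" using Ac Suc.prems(1) by (simp add: assoc_mult_mat[of _ n n _ n _ k])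
  thus ?case by (rule hermitian_square_mult_eq_0[OF A Suc.prems(1)])
qed

lemma pair_index_less: "r < (n::nat) \<Longrightarrow> s < n \<Longrightarrow> r * n + s < n * n"
proof -
  assume "r < n" "s < n"
  hence "r * n + s < (r + 1) * n" by simp
  also have "\<dots> \<le> n * n" using \<open>r < n\<close> by (intro mult_le_mono1) simp
  finally show ?thesis .
qed

fun mat_poly :: "(nat \<Rightarrow> complex) \<Rightarrow> nat \<Rightarrow> nat \<Rightarrow> complex mat \<Rightarrow> complex mat" where
  "mat_poly c 0 n A = 0\<^sub>m n n"
| "mat_poly c (Suc k) n A = mat_poly c k n A + c k \<cdot>\<^sub>m A ^\<^sub>m k"

lemma mat_poly_carrier[simp]: "A \<in> carrier_mat n n \<Longrightarrow> mat_poly c k n A \<in> carrier_mat n n"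
  by (induct k) auto

lemma index_mat_poly:
  "A \<in> carrier_mat n n \<Longrightarrow> i < n \<Longrightarrow> j < n \<Longrightarrow>
    mat_poly c k n A $$ (i, j) = (\<Sum>l<k. c l * (A ^\<^sub>m l) $$ (i, j))"
  by (induct k) auto

lemma mat_poly_eq_0: "A \<in> carrier_mat n n \<Longrightarrow> \<forall>l<k. c l = 0 \<Longrightarrow> mat_poly c k n A = 0\<^sub>m n n"
  by (induct k) auto

lemma pow_mat_add:
  assumes A: "A \<in> carrier_mat n n"
  shows "A ^\<^sub>m (j + k) = A ^\<^sub>m j * A ^\<^sub>m k"
  by (induct k) (use A in \<open>simp_all add: assoc_mult_mat[of _ n n _ n _ n]\<close>)

lemma pow_mat_Suc_left:
  assumes A: "A \<in> carrier_mat n n"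
  shows "A ^\<^sub>m Suc k = A * A ^\<^sub>m k"
  using pow_mat_add[OF A, of 1 k] A by simp

lemma mat_poly_shift_zeros:
  assumes A: "A \<in> carrier_mat n n" and z: "\<forall>l<j. c l = 0"
  shows "mat_poly c (j + k) n A = A ^\<^sub>m j * mat_poly (\<lambda>l. c (l + j)) k n A"
proof (induct k)
  case 0 thus ?case using mat_poly_eq_0[OF A z] A by simp
next
  case (Suc k)
  thus ?case using A pow_mat_add[OF A, of j k]
    by (simp add: mult_add_distrib_mat[of "A ^\<^sub>m j" n n _ n] mult_smult_distrib[of "A ^\<^sub>m j" n n _ n]
        add.commute)
qed

lemma mat_poly_Suc_factor:
  assumes A: "A \<in> carrier_mat n n"
  shows "mat_poly c (Suc k) n A = c 0 \<cdot>\<^sub>m 1\<^sub>m n + A * mat_poly (\<lambda>l. c (Suc l)) k n A"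
proof (induct k)
  case 0 thus ?case using A by simp
next
  case (Suc k)
  have "mat_poly c (Suc (Suc k)) n A
      = c 0 \<cdot>\<^sub>m 1\<^sub>m n + (A * mat_poly (\<lambda>l. c (Suc l)) k n A + c (Suc k) \<cdot>\<^sub>m (A * A ^\<^sub>m k))"
    using Suc pow_mat_Suc_left[OF A] A by (simp add: assoc_add_mat[of _ n n])
  also have "\<dots> = c 0 \<cdot>\<^sub>m 1\<^sub>m n + A * mat_poly (\<lambda>l. c (Suc l)) (Suc k) n A"
    using A by (simp add: mult_add_distrib_mat[OF A, of _ n] mult_smult_distrib[OF A, of _ n])
  finally show ?case .
qed

lemma vec_family_lin_dep:
  fixes f :: "nat \<Rightarrow> complex vec"
  assumes f: "\<And>l. f l \<in> carrier_vec N"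
  shows "\<exists>c. (\<exists>j<N + 1. c j \<noteq> 0) \<and> (\<forall>i<N. (\<Sum>l<N + 1. c l * f l $ i) = 0)"
proof (cases "inj_on f {..<N + 1}")
  case False
  then obtain j k where jk: "j < N + 1" "k < N + 1" "j \<noteq> k" "f j = f k"
    unfolding inj_on_def by auto
  define c where "c = (\<lambda>l. (if l = j then 1 else 0) - (if l = k then 1 else (0::complex)))"
  have "(\<Sum>l<N + 1. c l * f l $ i) = 0" for i
  proof -
    have "(\<Sum>l<N + 1. c l * f l $ i)
        = (\<Sum>l<N + 1. if l = j then f l $ i else 0) - (\<Sum>l<N + 1. if l = k then f l $ i else 0)"
      unfolding sum_subtractf[symmetric] by (rule sum.cong) (auto simp: c_def)
    also have "\<dots> = f j $ i - f k $ i"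
      using jk(1,2) by (simp only: sum.delta finite_lessThan lessThan_iff if_True)
    finally show ?thesis unfolding jk(4) by simp
  qed
  moreover have "c j \<noteq> 0" using jk by (auto simp: c_def)
  ultimately show ?thesis using jk(1) by (intro exI[of _ c]) blast
next
  case True
  interpret V: vec_space "TYPE(complex)" N .
  define S where "S = f ` {..<N + 1}"
  have S: "S \<subseteq> carrier_vec N" unfolding S_def using f by auto
  have card: "card S = N + 1" unfolding S_def using card_image[OF True] by simp
  have "V.lin_dep S"
  proof (rule ccontr)
    assume "\<not> V.lin_dep S"
    hence "card S \<le> V.dim" using V.li_le_dim[OF V.fin_dim] S by auto
    thus False using card V.dim_is_n by simp
  qed
  moreover have "finite S" unfolding S_def by simp
  ultimately obtain a v where a: "V.lincomb a S = 0\<^sub>v N" and v: "v \<in> S" "a v \<noteq> 0"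
    using V.finite_lin_dep[of S] S by auto
  have "(\<Sum>l<N + 1. a (f l) * f l $ i) = 0" if i: "i < N" for i
  proof -
    have "0 = V.lincomb a S $ i" using a i by simp
    also have "\<dots> = (\<Sum>x\<in>S. a x * x $ i)" by (rule V.lincomb_index[OF i S])
    also have "\<dots> = (\<Sum>l<N + 1. a (f l) * f l $ i)"
      unfolding S_def by (rule sum.reindex[OF True, unfolded comp_def])
    finally show ?thesis by simp
  qed
  moreover have "\<exists>j<N + 1. a (f j) \<noteq> 0" using v unfolding S_def by auto
  ultimately show ?thesis by (intro exI[of _ "\<lambda>l. a (f l)"]) blast
qed

lemma mat_powers_lin_dep:
  fixes A :: "complex mat"
  assumes A: "A \<in> carrier_mat n n"
  shows "\<exists>c m. (\<exists>j<m. c j \<noteq> 0) \<and> mat_poly c m n A = 0\<^sub>m n n"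
proof -
  \<comment> \<open>the n * n + 1 powers of A, flattened into vectors of length n * n, cannot be independent\<close>
  define f where "f = (\<lambda>l. vec (n * n) (\<lambda>i. (A ^\<^sub>m l) $$ (i div n, i mod n)))"
  obtain c where nz: "\<exists>j<n * n + 1. c j \<noteq> 0"
    and rel: "\<forall>i<n * n. (\<Sum>l<n * n + 1. c l * f l $ i) = 0"
    using vec_family_lin_dep[of f "n * n"] unfolding f_def by (meson vec_carrier)
  have "(\<Sum>l<n * n + 1. c l * (A ^\<^sub>m l) $$ (r, s)) = 0" if rs: "r < n" "s < n" for r s
  proof -
    have i: "r * n + s < n * n" using rs by (rule pair_index_less)
    have "f l $ (r * n + s) = (A ^\<^sub>m l) $$ (r, s)" for l using i rs by (simp add: f_def)
    thus ?thesis using rel[rule_format, OF i] by simp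
  qed
  hence "mat_poly c (n * n + 1) n A = 0\<^sub>m n n"
    by (intro eq_matI) (use A in \<open>auto simp: index_mat_poly\<close>)
  thus ?thesis using nz by blast
qed

definition bicommutant :: "nat \<Rightarrow> complex mat \<Rightarrow> complex mat set" where
  "bicommutant n A = {Y \<in> carrier_mat n n. \<forall>M \<in> carrier_mat n n. M * A = A * M \<longrightarrow> M * Y = Y * M}"

lemma pow_mat_commute:
  assumes A: "A \<in> carrier_mat n n" and M: "M \<in> carrier_mat n n" and c: "M * A = A * M"
  shows "M * A ^\<^sub>m k = A ^\<^sub>m k * M"
proof (induct k)
  case (Suc k)
  have "M * A ^\<^sub>m Suc k = (M * A ^\<^sub>m k) * A" using A M by (simp add: assoc_mult_mat[of _ n n _ n _ n])
  also have "\<dots> = A ^\<^sub>m k * (A * M)" using Suc A M c by (simp add: assoc_mult_mat[of _ n n _ n _ n])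
  also have "\<dots> = A ^\<^sub>m Suc k * M" using A M by (simp add: assoc_mult_mat[of _ n n _ n _ n])
  finally show ?case .
qed (use A M in simp)

lemma mat_poly_bicommutant: "A \<in> carrier_mat n n \<Longrightarrow> mat_poly c k n A \<in> bicommutant n A"
  unfolding bicommutant_def
proof (induct k)
  case (Suc k)
  show ?case
  proof (intro CollectI conjI ballI impI)
    fix M assume M: "M \<in> carrier_mat n n" and cm: "M * A = A * M"
    have "M * mat_poly c (Suc k) n A = M * mat_poly c k n A + c k \<cdot>\<^sub>m (M * A ^\<^sub>m k)"
      using Suc.prems M by (simp add: mult_add_distrib_mat[OF M, of _ n] mult_smult_distrib[OF M, of _ n])
    also have "\<dots> = mat_poly c k n A * M + c k \<cdot>\<^sub>m (A ^\<^sub>m k * M)"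
      using Suc M cm pow_mat_commute[OF Suc.prems M cm] by simp
    also have "\<dots> = mat_poly c (Suc k) n A * M"
      using Suc.prems M
      by (simp add: add_mult_distrib_mat[of _ n n _ M n] mult_smult_assoc_mat[of _ n n M n])
    finally show "M * mat_poly c (Suc k) n A = mat_poly c (Suc k) n A * M" .
  qed (use Suc.prems in simp)
qed auto

lemma smult_bicommutant: "Y \<in> bicommutant n A \<Longrightarrow> a \<cdot>\<^sub>m Y \<in> bicommutant n A"
  by (auto simp: bicommutant_def mult_smult_distrib mult_smult_assoc_mat)

lemma mat_annihilator_split:
  assumes A: "A \<in> carrier_mat n n" and nz: "\<exists>j<m. c j \<noteq> 0" and ann: "mat_poly c m n A = 0\<^sub>m n n"
  shows "\<exists>j. \<exists>q \<in> bicommutant n A. A ^\<^sub>m j * (1\<^sub>m n - A * q) = 0\<^sub>m n n"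
proof -
  define j where "j = (LEAST j. c j \<noteq> 0)"
  have cj: "c j \<noteq> 0" unfolding j_def using nz by (metis (mono_tags, lifting) LeastI)
  have below: "\<forall>l<j. c l = 0" unfolding j_def using not_less_Least by blast
  have "j < m" using nz Least_le[of "\<lambda>j. c j \<noteq> 0"] unfolding j_def by fastforce
  then obtain k where m: "m = j + Suc k" by (metis add_Suc_right less_iff_Suc_add add.commute)
  define P where "P = mat_poly (\<lambda>l. c (Suc l + j)) k n A"
  define q where "q = (- 1 / c j) \<cdot>\<^sub>m P"
  have P: "P \<in> carrier_mat n n" unfolding P_def using A by simp
  have "mat_poly c m n A = A ^\<^sub>m j * (c j \<cdot>\<^sub>m 1\<^sub>m n + A * P)"
    using mat_poly_shift_zeros[OF A below, of "Suc k"] mat_poly_Suc_factor[OF A, of "\<lambda>l. c (l + j)" k]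
    unfolding m P_def by simp
  also have "c j \<cdot>\<^sub>m 1\<^sub>m n + A * P = c j \<cdot>\<^sub>m (1\<^sub>m n - A * q)"
    unfolding q_def using A P cj by (intro eq_matI) (auto simp: mult_smult_distrib field_simps)
  also have "A ^\<^sub>m j * \<dots> = c j \<cdot>\<^sub>m (A ^\<^sub>m j * (1\<^sub>m n - A * q))"
    unfolding q_def using A P by (intro mult_smult_distrib) auto
  finally have "c j \<cdot>\<^sub>m (A ^\<^sub>m j * (1\<^sub>m n - A * q)) = 0\<^sub>m n n" using ann by simp
  hence "A ^\<^sub>m j * (1\<^sub>m n - A * q) = 0\<^sub>m n n"
    by (rule smult_mat_eq_0_imp_eq_0[rotated, OF cj])
      (use A P in \<open>auto simp: q_def intro!: mult_carrier_mat[of _ n n] minus_carrier_mat\<close>)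
  moreover have "q \<in> bicommutant n A"
    unfolding q_def P_def by (intro smult_bicommutant mat_poly_bicommutant A)
  ultimately show ?thesis by blast
qed

text \<open>The generalized inverse is a polynomial in A, hence commutes with everything that commutes
  with A; this is what keeps it inside the commutant of a group representation.\<close>

lemma hermitian_ginv_bicommutant:
  assumes A: "hermitian_mat n A"
  shows "\<exists>Y \<in> bicommutant n A. A * Y * A = A"
proof -
  have Ac: "A \<in> carrier_mat n n" using A unfolding hermitian_mat_def by auto
  obtain c m where "\<exists>j<m. c j \<noteq> 0" "mat_poly c m n A = 0\<^sub>m n n"
    using mat_powers_lin_dep[OF Ac] by blast
  then obtain j q where q: "q \<in> bicommutant n A" and z: "A ^\<^sub>m j * (1\<^sub>m n - A * q) = 0\<^sub>m n n"
    using mat_annihilator_split[OF Ac] by blast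
  have qc: "q \<in> carrier_mat n n" using q unfolding bicommutant_def by auto
  have "A * (1\<^sub>m n - A * q) = 0\<^sub>m n n"
    by (rule hermitian_pow_mult_eq_0[OF A _ z]) (use Ac qc in auto)
  hence "A - A * (A * q) = 0\<^sub>m n n" using Ac qc by (simp add: mult_minus_distrib_mat[of _ n n _ n])
  hence AAq: "A = A * (A * q)" by (rule minus_mat_eq_0_imp_eq[rotated 2]) (use Ac qc in auto)
  have "A * q * A = A * (q * A)" using Ac qc Ac by (rule assoc_mult_mat)
  also have "q * A = A * q" using q Ac unfolding bicommutant_def by auto
  finally have "A * q * A = A" using AAq by simp
  thus ?thesis using q by blast
qed

lemma hermitian_rng_subset_supp:
  assumes A: "hermitian_mat n A"
  shows "rng_mat n A \<subseteq> supp_mat n A"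
proof
  have Ac: "A \<in> carrier_mat n n" and Aa: "adj A = A" using A unfolding hermitian_mat_def by auto
  fix w assume "w \<in> rng_mat n A"
  then obtain v where v: "v \<in> carrier_vec n" and w: "w = A *\<^sub>v v" unfolding rng_mat_def by auto
  show "w \<in> supp_mat n A" unfolding supp_mat_def
  proof (intro CollectI conjI ballI)
    show "w \<in> carrier_vec n" using w v Ac by auto
    fix x assume "x \<in> ker_mat n A"
    hence x: "x \<in> carrier_vec n" and Ax: "A *\<^sub>v x = 0\<^sub>v n" unfolding ker_mat_def using Ac by auto
    show "w \<bullet>c x = 0" unfolding w using cscalar_prod_adjoint[OF Ac v x] Aa Ax v by simp
  qed
qed

lemma hermitian_supp_subset_rng:
  assumes A: "hermitian_mat n A"
  shows "supp_mat n A \<subseteq> rng_mat n A"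
proof
  have Ac: "A \<in> carrier_mat n n" and Aa: "adj A = A" using A unfolding hermitian_mat_def by auto
  obtain Y where Y: "Y \<in> bicommutant n A" and AYA: "A * Y * A = A"
    using hermitian_ginv_bicommutant[OF A] by blast
  have Yc: "Y \<in> carrier_mat n n" and AY: "A * Y = Y * A" using Y Ac unfolding bicommutant_def by auto
  fix w assume "w \<in> supp_mat n A"
  hence w: "w \<in> carrier_vec n" and orth: "\<And>x. x \<in> ker_mat n A \<Longrightarrow> w \<bullet>c x = 0"
    unfolding supp_mat_def by auto
  define b where "b = w - A *\<^sub>v (Y *\<^sub>v w)"
  have Yw: "Y *\<^sub>v w \<in> carrier_vec n" and AYw: "A *\<^sub>v (Y *\<^sub>v w) \<in> carrier_vec n" using Ac Yc w by auto
  have b: "b \<in> carrier_vec n" unfolding b_def using w AYw by auto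
  have "A *\<^sub>v (A *\<^sub>v (Y *\<^sub>v w)) = (A * (A * Y)) *\<^sub>v w"
    using Ac Yc w by (simp add: assoc_mult_mat_vec[of _ n n _ n])
  also have "A * (A * Y) = A * (Y * A)" using AY by simp
  also have "\<dots> = A * Y * A" using Ac Yc Ac by (rule assoc_mult_mat[symmetric])
  finally have "A *\<^sub>v (A *\<^sub>v (Y *\<^sub>v w)) = (A * Y * A) *\<^sub>v w" .
  hence Ab: "A *\<^sub>v b = 0\<^sub>v n" unfolding b_def AYA using Ac w AYw by (simp add: mult_minus_distrib_mat_vec)
  have "b \<bullet>c b = w \<bullet>c b - (A *\<^sub>v (Y *\<^sub>v w)) \<bullet>c b"
    unfolding b_def by (rule minus_scalar_prod_distrib[OF w AYw]) (use b in \<open>simp add: b_def\<close>)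
  also have "(A *\<^sub>v (Y *\<^sub>v w)) \<bullet>c b = 0"
    using cscalar_prod_adjoint[OF Ac Yw b] Aa Ab Yw by simp
  also have "w \<bullet>c b = 0" using orth Ab b unfolding ker_mat_def using Ac by auto
  finally have "b = 0\<^sub>v n" using conjugate_square_eq_0_vec[OF b] by simp
  hence "w = A *\<^sub>v (Y *\<^sub>v w)"
    unfolding b_def by (rule minus_vec_eq_0_imp_eq[OF w AYw])
  thus "w \<in> rng_mat n A" unfolding rng_mat_def using Yw by auto
qed

lemma hermitian_supp_eq_rng: "hermitian_mat n A \<Longrightarrow> supp_mat n A = rng_mat n A"
  using hermitian_supp_subset_rng hermitian_rng_subset_supp by blast

lemma rng_mat_mult_subset:
  assumes A: "A \<in> carrier_mat n n" and B: "B \<in> carrier_mat n n"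
  shows "rng_mat n (A * B) \<subseteq> rng_mat n A"
proof
  fix w assume "w \<in> rng_mat n (A * B)"
  then obtain v where v: "v \<in> carrier_vec n" "w = (A * B) *\<^sub>v v" unfolding rng_mat_def by auto
  hence "w = A *\<^sub>v (B *\<^sub>v v)" using A B by (simp add: assoc_mult_mat_vec[of _ n n _ n])
  thus "w \<in> rng_mat n A" unfolding rng_mat_def using B v by auto
qed

section \<open>Positivity of perturbed sandwiches\<close>

lemma cmod_form_le_norm:
  fixes B :: "complex mat"
  assumes B: "B \<in> carrier_mat n n"
  shows "\<exists>\<beta>\<ge>0. \<forall>w\<in>carrier_vec n. cmod ((B *\<^sub>v w) \<bullet>c w) \<le> \<beta> * Re (w \<bullet>c w)"
proof (intro exI[of _ "\<Sum>i<n. \<Sum>j<n. cmod (B $$ (i, j))"] conjI ballI)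
  show "0 \<le> (\<Sum>i<n. \<Sum>j<n. cmod (B $$ (i, j)))" by (intro sum_nonneg) auto
  fix w :: "complex vec" assume w: "w \<in> carrier_vec n"
  define s where "s = Re (w \<bullet>c w)"
  have "w \<bullet>c w = (\<Sum>k<n. w $ k * cnj (w $ k))" using w by (simp add: scalar_prod_def lessThan_atLeast0)
  also have "\<dots> = (\<Sum>k<n. complex_of_real ((cmod (w $ k))^2))"
    by (intro sum.cong refl) (rule complex_norm_square[symmetric])
  finally have "w \<bullet>c w = (\<Sum>k<n. complex_of_real ((cmod (w $ k))^2))" .
  hence s: "s = (\<Sum>k<n. (cmod (w $ k))^2)" unfolding s_def by simp
  have entry_le: "cmod (w $ i) \<le> sqrt s" if "i < n" for i
    using member_le_sum[of i "{..<n}" "\<lambda>k. (cmod (w $ k))^2"] that unfolding s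
    by (simp add: real_le_rsqrt)
  have s0: "0 \<le> s" unfolding s by (intro sum_nonneg) auto
  have "cmod ((B *\<^sub>v w) \<bullet>c w) = cmod (\<Sum>i<n. \<Sum>j<n. B $$ (i, j) * w $ j * cnj (w $ i))"
    using B w by (auto simp: scalar_prod_def row_def lessThan_atLeast0 sum_distrib_right intro!: sum.cong)
  also have "\<dots> \<le> (\<Sum>i<n. \<Sum>j<n. cmod (B $$ (i, j)) * (cmod (w $ i) * cmod (w $ j)))"
    by (rule order.trans[OF norm_sum sum_mono[OF order.trans[OF norm_sum]]])
      (simp add: norm_mult mult.commute mult.left_commute)
  also have "\<dots> \<le> (\<Sum>i<n. \<Sum>j<n. cmod (B $$ (i, j)) * (sqrt s * sqrt s))"
    using entry_le s0 by (intro sum_mono mult_left_mono mult_mono) auto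
  also have "\<dots> = (\<Sum>i<n. \<Sum>j<n. cmod (B $$ (i, j))) * s" using s0 by (simp add: sum_distrib_right)
  finally show "cmod ((B *\<^sub>v w) \<bullet>c w) \<le> (\<Sum>i<n. \<Sum>j<n. cmod (B $$ (i, j))) * Re (w \<bullet>c w)"
    unfolding s_def .
qed

lemma psd_norm_le_form:
  assumes Q: "psd n Q"
  shows "\<exists>\<gamma>\<ge>0. \<forall>u\<in>carrier_vec n. Re ((Q *\<^sub>v u) \<bullet>c (Q *\<^sub>v u)) \<le> \<gamma> * Re ((Q *\<^sub>v u) \<bullet>c u)"
proof -
  have Qc: "Q \<in> carrier_mat n n" using Q unfolding psd_def hermitian_mat_def by auto
  obtain \<gamma> where \<gamma>0: "\<gamma> \<ge> 0" and \<gamma>: "\<forall>w\<in>carrier_vec n. cmod ((Q *\<^sub>v w) \<bullet>c w) \<le> \<gamma> * Re (w \<bullet>c w)"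
    using cmod_form_le_norm[OF Qc] by blast
  have "Re ((Q *\<^sub>v u) \<bullet>c (Q *\<^sub>v u)) \<le> \<gamma> * Re ((Q *\<^sub>v u) \<bullet>c u)" if u: "u \<in> carrier_vec n" for u
  proof -
    have Qu: "Q *\<^sub>v u \<in> carrier_vec n" using Qc u by auto
    define a where "a = Re ((Q *\<^sub>v u) \<bullet>c (Q *\<^sub>v u))"
    define f where "f = Re ((Q *\<^sub>v u) \<bullet>c u)"
    have a0: "0 \<le> a" unfolding a_def by (rule Re_cscalar_prod_self_nonneg)
    have f0: "0 \<le> f" unfolding f_def using Q u unfolding psd_def by blast
    have "Re ((Q *\<^sub>v (Q *\<^sub>v u)) \<bullet>c (Q *\<^sub>v u)) \<le> cmod ((Q *\<^sub>v (Q *\<^sub>v u)) \<bullet>c (Q *\<^sub>v u))"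
      by (rule complex_Re_le_cmod)
    also have "\<dots> \<le> \<gamma> * a" unfolding a_def using \<gamma> Qu by blast
    finally have "f * Re ((Q *\<^sub>v (Q *\<^sub>v u)) \<bullet>c (Q *\<^sub>v u)) \<le> f * (\<gamma> * a)"
      using f0 by (rule mult_left_mono)
    hence "a^2 \<le> f * (\<gamma> * a)"
      using psd_cauchy_schwarz[OF Q u Qu] unfolding a_def f_def by linarith
    hence "a * a \<le> (\<gamma> * f) * a" by (simp add: power2_eq_square algebra_simps)
    thus ?thesis using a0 \<gamma>0 f0 unfolding a_def[symmetric] f_def[symmetric]
      by (cases "a = 0") auto
  qed
  thus ?thesis using \<gamma>0 by blast
qed

lemma rng_subset_imp_sandwich:
  assumes Q: "hermitian_mat n Q" and Op: "hermitian_mat n Op" and sub: "rng_mat n Op \<subseteq> rng_mat n Q"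
  shows "\<exists>B \<in> carrier_mat n n. Op = Q * B * Q"
proof -
  have Qc: "Q \<in> carrier_mat n n" and aQ: "adj Q = Q" using Q unfolding hermitian_mat_def by auto
  have Oc: "Op \<in> carrier_mat n n" and aO: "adj Op = Op" using Op unfolding hermitian_mat_def by auto
  obtain Y where "Y \<in> bicommutant n Q" and QYQ: "Q * Y * Q = Q"
    using hermitian_ginv_bicommutant[OF Q] by blast
  hence Yc: "Y \<in> carrier_mat n n" unfolding bicommutant_def by auto
  have aYc: "adj Y \<in> carrier_mat n n" using Yc by simp
  define P where "P = Q * Y"
  have Pc: "P \<in> carrier_mat n n" unfolding P_def using Qc Yc by auto
  have POp: "P * Op = Op"
  proof (rule mat_eq_by_mult_vec[of _ n n])
    fix v :: "complex vec" assume v: "v \<in> carrier_vec n"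
    have "Op *\<^sub>v v \<in> rng_mat n Q" using sub v unfolding rng_mat_def by auto
    then obtain z where z: "z \<in> carrier_vec n" and ez: "Op *\<^sub>v v = Q *\<^sub>v z" unfolding rng_mat_def by auto
    have "(P * Op) *\<^sub>v v = P *\<^sub>v (Q *\<^sub>v z)"
      unfolding ez[symmetric] by (rule assoc_mult_mat_vec) (use Pc Oc v in auto)
    also have "\<dots> = (Q * Y * Q) *\<^sub>v z" unfolding P_def
      by (subst assoc_mult_mat_vec[symmetric]) (use Qc Yc z in auto)
    finally show "(P * Op) *\<^sub>v v = Op *\<^sub>v v" unfolding QYQ ez .
  qed (use Pc Oc in auto)
  have "Op * adj P = Op" using mat_adjoint_mult[OF Pc Oc] aO POp by simp
  hence "Op = P * (Op * (adj Y * Q))"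
    using POp mat_adjoint_mult[OF Qc Yc] aQ unfolding P_def by simp
  also have "\<dots> = Q * (Y * (Op * (adj Y * Q)))" unfolding P_def
    by (rule assoc_mult_mat) (use Qc Yc Oc aYc in auto)
  also have "Op * (adj Y * Q) = Op * adj Y * Q" by (rule assoc_mult_mat[symmetric]) (use Qc Oc aYc in auto)
  also have "Y * (Op * adj Y * Q) = Y * (Op * adj Y) * Q"
    by (rule assoc_mult_mat[symmetric]) (use Qc Yc Oc aYc in auto)
  also have "Q * (Y * (Op * adj Y) * Q) = Q * (Y * (Op * adj Y)) * Q"
    by (rule assoc_mult_mat[symmetric]) (use Qc Yc Oc aYc in auto)
  finally show ?thesis using Yc Oc aYc by auto
qed

lemma sandwich_form:
  assumes X: "X \<in> carrier_mat n n" and M: "M \<in> carrier_mat n n" and v: "v \<in> carrier_vec n"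
  shows "((adj X * M * X) *\<^sub>v v) \<bullet>c v = (M *\<^sub>v (X *\<^sub>v v)) \<bullet>c (X *\<^sub>v v)"
proof -
  have "(adj X * M * X) *\<^sub>v v = adj X *\<^sub>v (M *\<^sub>v (X *\<^sub>v v))"
    using X M v by (simp add: assoc_mult_mat_vec[of _ n n _ n])
  thus ?thesis using cscalar_prod_adjoint[of "adj X" n n "M *\<^sub>v (X *\<^sub>v v)" v] X M v by simp
qed

lemma hermitian_form_le_psd_form:
  assumes Q: "psd n Q" and Op: "hermitian_mat n Op" and sub: "rng_mat n Op \<subseteq> rng_mat n Q"
  shows "\<exists>\<kappa>\<ge>0. \<forall>u\<in>carrier_vec n. \<bar>Re ((Op *\<^sub>v u) \<bullet>c u)\<bar> \<le> \<kappa> * Re ((Q *\<^sub>v u) \<bullet>c u)"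
proof -
  have hQ: "hermitian_mat n Q" using Q unfolding psd_def by auto
  hence Qc: "Q \<in> carrier_mat n n" and aQ: "adj Q = Q" unfolding hermitian_mat_def by auto
  obtain B where Bc: "B \<in> carrier_mat n n" and OB: "Op = Q * B * Q"
    using rng_subset_imp_sandwich[OF hQ Op sub] by blast
  obtain \<beta> where \<beta>0: "\<beta> \<ge> 0" and \<beta>: "\<forall>w\<in>carrier_vec n. cmod ((B *\<^sub>v w) \<bullet>c w) \<le> \<beta> * Re (w \<bullet>c w)"
    using cmod_form_le_norm[OF Bc] by blast
  obtain \<gamma> where \<gamma>0: "\<gamma> \<ge> 0"
    and \<gamma>: "\<forall>u\<in>carrier_vec n. Re ((Q *\<^sub>v u) \<bullet>c (Q *\<^sub>v u)) \<le> \<gamma> * Re ((Q *\<^sub>v u) \<bullet>c u)"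
    using psd_norm_le_form[OF Q] by blast
  have "\<bar>Re ((Op *\<^sub>v u) \<bullet>c u)\<bar> \<le> (\<beta> * \<gamma>) * Re ((Q *\<^sub>v u) \<bullet>c u)" if u: "u \<in> carrier_vec n" for u
  proof -
    have "(Op *\<^sub>v u) \<bullet>c u = (B *\<^sub>v (Q *\<^sub>v u)) \<bullet>c (Q *\<^sub>v u)"
      using sandwich_form[OF Qc Bc u] unfolding OB aQ .
    hence "\<bar>Re ((Op *\<^sub>v u) \<bullet>c u)\<bar> \<le> cmod ((B *\<^sub>v (Q *\<^sub>v u)) \<bullet>c (Q *\<^sub>v u))"
      by (simp add: abs_Re_le_cmod)
    also have "\<dots> \<le> \<beta> * Re ((Q *\<^sub>v u) \<bullet>c (Q *\<^sub>v u))" using \<beta> Qc u by simp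
    also have "\<dots> \<le> \<beta> * (\<gamma> * Re ((Q *\<^sub>v u) \<bullet>c u))" using \<gamma> u \<beta>0 by (intro mult_left_mono) auto
    finally show ?thesis by (simp add: mult.assoc)
  qed
  thus ?thesis using \<beta>0 \<gamma>0 by (intro exI[of _ "\<beta> * \<gamma>"]) auto
qed

lemma hermitian_add_smult:
  assumes "hermitian_mat n R" "hermitian_mat n T"
  shows "hermitian_mat n (R + complex_of_real t \<cdot>\<^sub>m T)"
  using assms unfolding hermitian_mat_def by (auto simp: mat_adjoint_add[of _ n n] mat_adjoint_smult)

lemma minus_smult_eq_add_smult:
  "R \<in> carrier_mat n m \<Longrightarrow> T \<in> carrier_mat n m \<Longrightarrow>
    R - complex_of_real t \<cdot>\<^sub>m T = R + complex_of_real (- t) \<cdot>\<^sub>m T"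
  by (intro eq_matI) auto

lemma psd_add_smult:
  assumes R: "psd n R" and T: "hermitian_mat n T"
    and bound: "\<forall>v\<in>carrier_vec n. \<bar>Re ((T *\<^sub>v v) \<bullet>c v)\<bar> \<le> \<kappa> * Re ((R *\<^sub>v v) \<bullet>c v)"
    and t: "\<bar>t\<bar> * \<kappa> \<le> 1"
  shows "psd n (R + complex_of_real t \<cdot>\<^sub>m T)"
  unfolding psd_def
proof (intro conjI ballI)
  have hR: "hermitian_mat n R" using R unfolding psd_def by auto
  thus "hermitian_mat n (R + complex_of_real t \<cdot>\<^sub>m T)" using T by (rule hermitian_add_smult)
  have Rc: "R \<in> carrier_mat n n" and Tc: "T \<in> carrier_mat n n"
    using hR T unfolding hermitian_mat_def by auto
  fix v :: "complex vec" assume v: "v \<in> carrier_vec n"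
  have "Re (((R + complex_of_real t \<cdot>\<^sub>m T) *\<^sub>v v) \<bullet>c v) = Re ((R *\<^sub>v v) \<bullet>c v) + t * Re ((T *\<^sub>v v) \<bullet>c v)"
    using Rc Tc v by (simp add: add_mult_distrib_mat_vec[of _ n n] smult_mult_mat_vec add_scalar_prod_distrib[of _ n])
  moreover have "\<bar>t * Re ((T *\<^sub>v v) \<bullet>c v)\<bar> \<le> Re ((R *\<^sub>v v) \<bullet>c v)"
  proof -
    have f0: "0 \<le> Re ((R *\<^sub>v v) \<bullet>c v)" using R v unfolding psd_def by blast
    have "\<bar>t * Re ((T *\<^sub>v v) \<bullet>c v)\<bar> \<le> \<bar>t\<bar> * (\<kappa> * Re ((R *\<^sub>v v) \<bullet>c v))"
      unfolding abs_mult using bound v by (intro mult_left_mono) auto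
    also have "\<dots> \<le> 1 * Re ((R *\<^sub>v v) \<bullet>c v)"
      unfolding mult.assoc[symmetric] using t f0 by (intro mult_right_mono)
    finally show ?thesis by simp
  qed
  ultimately show "0 \<le> Re (((R + complex_of_real t \<cdot>\<^sub>m T) *\<^sub>v v) \<bullet>c v)" by linarith
qed

lemma psd_sandwich_perturbation:
  assumes X: "X \<in> carrier_mat n n" and Q: "psd n Q" and Op: "hermitian_mat n Op"
    and sub: "rng_mat n Op \<subseteq> rng_mat n Q"
  shows "\<exists>t>0. psd n (adj X * Q * X + complex_of_real t \<cdot>\<^sub>m (adj X * Op * X))
             \<and> psd n (adj X * Q * X - complex_of_real t \<cdot>\<^sub>m (adj X * Op * X))"
proof -
  obtain \<kappa> where \<kappa>0: "\<kappa> \<ge> 0"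
    and \<kappa>: "\<forall>u\<in>carrier_vec n. \<bar>Re ((Op *\<^sub>v u) \<bullet>c u)\<bar> \<le> \<kappa> * Re ((Q *\<^sub>v u) \<bullet>c u)"
    using hermitian_form_le_psd_form[OF Q Op sub] by blast
  have Qc: "Q \<in> carrier_mat n n" and aQ: "adj Q = Q" using Q unfolding psd_def hermitian_mat_def by auto
  have Oc: "Op \<in> carrier_mat n n" and aO: "adj Op = Op" using Op unfolding hermitian_mat_def by auto
  have adj_sandwich: "adj (adj X * M * X) = adj X * adj M * X" if "M \<in> carrier_mat n n" for M
    using mat_adjoint_sandwich[OF X that] .
  have R: "psd n (adj X * Q * X)"
    unfolding psd_def hermitian_mat_def
    using X Qc aQ adj_sandwich[OF Qc] sandwich_form[OF X Qc] Q unfolding psd_def by auto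
  have T: "hermitian_mat n (adj X * Op * X)"
    unfolding hermitian_mat_def using X Oc aO adj_sandwich[OF Oc] by auto
  have bound: "\<forall>v\<in>carrier_vec n.
      \<bar>Re (((adj X * Op * X) *\<^sub>v v) \<bullet>c v)\<bar> \<le> \<kappa> * Re (((adj X * Q * X) *\<^sub>v v) \<bullet>c v)"
    using \<kappa> X sandwich_form[OF X Qc] sandwich_form[OF X Oc] by simp
  define t where "t = 1 / (\<kappa> + 1)"
  have t: "t > 0" "\<bar>t\<bar> * \<kappa> \<le> 1" "\<bar>- t\<bar> * \<kappa> \<le> 1" unfolding t_def using \<kappa>0 by (auto simp: field_simps)
  have "psd n (adj X * Q * X - complex_of_real t \<cdot>\<^sub>m (adj X * Op * X))"
    using psd_add_smult[OF R T bound t(3)] X Qc Oc by (simp add: minus_smult_eq_add_smult[of _ n n])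
  thus ?thesis using psd_add_smult[OF R T bound t(2)] t(1) by blast
qed

lemma hermitian_of_add_smult:
  assumes R: "hermitian_mat n R" and RT: "hermitian_mat n (R + complex_of_real t \<cdot>\<^sub>m T)"
    and T: "T \<in> carrier_mat n n" and t: "t \<noteq> 0"
  shows "hermitian_mat n T"
proof -
  have Rc: "R \<in> carrier_mat n n" using R unfolding hermitian_mat_def by auto
  have T_eq: "T = complex_of_real (1 / t) \<cdot>\<^sub>m ((R + complex_of_real t \<cdot>\<^sub>m T) - R)"
    using Rc T t by (intro eq_matI) auto
  have "adj T = complex_of_real (1 / t) \<cdot>\<^sub>m (adj (R + complex_of_real t \<cdot>\<^sub>m T) - adj R)"
    by (subst T_eq) (use Rc T in \<open>simp add: mat_adjoint_smult mat_adjoint_minus[of _ n n]\<close>)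
  also have "\<dots> = T" using R RT T_eq unfolding hermitian_mat_def by simp
  finally show ?thesis using T unfolding hermitian_mat_def by simp
qed

lemma psd_add_minus_smult_kernel:
  assumes plus: "psd n (R + complex_of_real t \<cdot>\<^sub>m T)" and minus: "psd n (R - complex_of_real t \<cdot>\<^sub>m T)"
    and t: "t \<noteq> 0" and R: "R \<in> carrier_mat n n" and T: "T \<in> carrier_mat n n"
    and v: "v \<in> carrier_vec n" and Rv: "R *\<^sub>v v = 0\<^sub>v n"
  shows "T *\<^sub>v v = 0\<^sub>v n"
proof -
  have apply_v: "(R + complex_of_real s \<cdot>\<^sub>m T) *\<^sub>v v = complex_of_real s \<cdot>\<^sub>v (T *\<^sub>v v)" for s
    using R T v Rv by (simp add: add_mult_distrib_mat_vec[of _ n n] smult_mult_mat_vec)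
  have form: "Re (((R + complex_of_real s \<cdot>\<^sub>m T) *\<^sub>v v) \<bullet>c v) = s * Re ((T *\<^sub>v v) \<bullet>c v)" for s
    unfolding apply_v using T v by (simp add: smult_scalar_prod_distrib[of _ n])
  have "psd n (R + complex_of_real (- t) \<cdot>\<^sub>m T)"
    using minus R T by (simp add: minus_smult_eq_add_smult[of _ n n])
  hence "0 \<le> - t * Re ((T *\<^sub>v v) \<bullet>c v)" using form[of "- t"] v unfolding psd_def by metis
  moreover have "0 \<le> t * Re ((T *\<^sub>v v) \<bullet>c v)" using form[of t] plus v unfolding psd_def by metis
  ultimately have "Re (((R + complex_of_real t \<cdot>\<^sub>m T) *\<^sub>v v) \<bullet>c v) = 0" unfolding form by simp
  from psd_form_eq_0_imp_kernel[OF plus v this]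
  have "complex_of_real t \<cdot>\<^sub>v (T *\<^sub>v v) = 0\<^sub>v n" unfolding apply_v .
  thus ?thesis using t T
    by (metis (no_types, lifting) eq_vecI index_smult_vec(1) index_zero_vec mult_eq_0_iff
        of_real_eq_0_iff dim_mult_mat_vec carrier_matD(1) index_smult_vec(2))
qed

lemma gram_mult_vec_eq_0_imp_eq_0: "X \<in> carrier_mat n n \<Longrightarrow> v \<in> carrier_vec n \<Longrightarrow> (adj X * X) *\<^sub>v v = 0\<^sub>v n \<Longrightarrow> X *\<^sub>v v = 0\<^sub>v n"
  using cscalar_prod_adjoint[of X n n v "X *\<^sub>v v"] conjugate_square_eq_0_vec[of "X *\<^sub>v v" n]
  by (simp add: assoc_mult_mat_vec[of _ n n _ n])

lemma kernel_subset_imp_mult_eq_0: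
  fixes T M C :: "complex mat"
  assumes T: "T \<in> carrier_mat n n" and M: "M \<in> carrier_mat n n" and C: "C \<in> carrier_mat n n"
    and ker: "\<And>v. v \<in> carrier_vec n \<Longrightarrow> M *\<^sub>v v = 0\<^sub>v n \<Longrightarrow> T *\<^sub>v v = 0\<^sub>v n"
    and MC: "M * C = 0\<^sub>m n n"
  shows "T * C = 0\<^sub>m n n"
proof (rule mat_eq_by_mult_vec[of _ n n])
  fix v :: "complex vec" assume v: "v \<in> carrier_vec n"
  have "M *\<^sub>v (C *\<^sub>v v) = 0\<^sub>v n" using M C v MC assoc_mult_mat_vec[of M n n C n v] by simp
  thus "(T * C) *\<^sub>v v = 0\<^sub>m n n *\<^sub>v v" using ker[of "C *\<^sub>v v"] T C v by simp
qed (use T C in auto)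

lemma sandwich_eq_0_imp_eq_0:
  assumes Op: "hermitian_mat n Op" and sub: "supp_mat n Op \<subseteq> rng_mat n X" and X: "X \<in> carrier_mat n n"
    and z: "adj X * Op * X = 0\<^sub>m n n"
  shows "Op = 0\<^sub>m n n"
proof -
  have Oc: "Op \<in> carrier_mat n n" using Op unfolding hermitian_mat_def by auto
  have in_rng: "\<exists>z\<in>carrier_vec n. Op *\<^sub>v v = X *\<^sub>v z" if v: "v \<in> carrier_vec n" for v
  proof -
    have "Op *\<^sub>v v \<in> rng_mat n Op" unfolding rng_mat_def using v by auto
    thus ?thesis using sub hermitian_supp_eq_rng[OF Op] unfolding rng_mat_def by auto
  qed
  have OX: "Op * X = 0\<^sub>m n n"
  proof (rule mat_eq_by_mult_vec[of _ n n])
    fix v :: "complex vec" assume v: "v \<in> carrier_vec n"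
    obtain z where z: "z \<in> carrier_vec n" and ez: "Op *\<^sub>v (X *\<^sub>v v) = X *\<^sub>v z"
      using in_rng[of "X *\<^sub>v v"] X v by auto
    have "(Op *\<^sub>v (X *\<^sub>v v)) \<bullet>c (Op *\<^sub>v (X *\<^sub>v v)) = (Op *\<^sub>v (X *\<^sub>v v)) \<bullet>c (X *\<^sub>v z)"
      by (subst (2) ez) (rule refl)
    also have "\<dots> = ((adj X * Op * X) *\<^sub>v v) \<bullet>c z"
      using cscalar_prod_adjoint[of "adj X" n n "Op *\<^sub>v (X *\<^sub>v v)" z] X Oc v z
      by (simp add: assoc_mult_mat_vec[of _ n n _ n])
    also have "\<dots> = 0" using z v by (simp add: \<open>adj X * Op * X = 0\<^sub>m n n\<close>)
    finally show "(Op * X) *\<^sub>v v = 0\<^sub>m n n *\<^sub>v v"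
      using conjugate_square_eq_0_vec[of "Op *\<^sub>v (X *\<^sub>v v)" n] X Oc v
      by (simp add: assoc_mult_mat_vec[of _ n n _ n])
  qed (use Oc X in auto)
  have "Op * Op = 0\<^sub>m n n"
  proof (rule mat_eq_by_mult_vec[of _ n n])
    fix v :: "complex vec" assume v: "v \<in> carrier_vec n"
    then obtain z where z: "z \<in> carrier_vec n" and ez: "Op *\<^sub>v v = X *\<^sub>v z" using in_rng by blast
    have "(Op * Op) *\<^sub>v v = (Op * X) *\<^sub>v z"
      using Oc X v z ez by (simp add: assoc_mult_mat_vec[of _ n n _ n])
    thus "(Op * Op) *\<^sub>v v = 0\<^sub>m n n *\<^sub>v v" using OX z v by simp
  qed (use Oc in auto)
  hence "Op * 1\<^sub>m n = 0\<^sub>m n n"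
    using hermitian_square_mult_eq_0[OF Op, of "1\<^sub>m n" n] Oc by simp
  thus ?thesis using Oc by simp
qed

section \<open>Perturbations in a star algebra with generalized inverses\<close>

lemma ptrace_K_carrier[simp]: "ptrace_K dK dH R \<in> carrier_mat dH dH"
  unfolding ptrace_K_def by auto

lemma ptrace_K_add_smult:
  assumes A: "A \<in> carrier_mat (dK * dH) (dK * dH)" and B: "B \<in> carrier_mat (dK * dH) (dK * dH)"
  shows "ptrace_K dK dH (A + c \<cdot>\<^sub>m B) = ptrace_K dK dH A + c \<cdot>\<^sub>m ptrace_K dK dH B"
proof (rule eq_matI)
  fix i j assume "i < dim_row (ptrace_K dK dH A + c \<cdot>\<^sub>m ptrace_K dK dH B)"
    and "j < dim_col (ptrace_K dK dH A + c \<cdot>\<^sub>m ptrace_K dK dH B)"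
  hence ij: "i < dH" "j < dH" unfolding ptrace_K_def by auto
  have "l * dH + x < dK * dH" if "l < dK" "x < dH" for l x
  proof -
    have "l * dH + x < (l + 1) * dH" using that by simp
    also have "\<dots> \<le> dK * dH" using that by (intro mult_le_mono1) simp
    finally show ?thesis .
  qed
  thus "ptrace_K dK dH (A + c \<cdot>\<^sub>m B) $$ (i, j) = (ptrace_K dK dH A + c \<cdot>\<^sub>m ptrace_K dK dH B) $$ (i, j)"
    using ij A B by (auto simp: ptrace_K_def sum.distrib sum_distrib_left intro!: sum.cong)
qed (auto simp: ptrace_K_def)

lemma add_smult_eq_self_imp_eq_0:
  fixes A B :: "'a :: field mat"
  assumes A: "A \<in> carrier_mat n m" and B: "B \<in> carrier_mat n m" and c: "c \<noteq> 0"
    and eq: "A + c \<cdot>\<^sub>m B = A"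
  shows "B = 0\<^sub>m n m"
proof (rule eq_matI)
  fix i j assume ij: "i < dim_row (0\<^sub>m n m :: 'a mat)" "j < dim_col (0\<^sub>m n m :: 'a mat)"
  from arg_cong[OF eq, of "\<lambda>M. M $$ (i, j)"] show "B $$ (i, j) = 0\<^sub>m n m $$ (i, j)" using A B ij c by simp
qed (use B in auto)

locale ginv_star_algebra =
  fixes n :: nat and A :: "complex mat set"
  assumes subset_carrier: "A \<subseteq> carrier_mat n n"
    and add_closed: "X \<in> A \<Longrightarrow> Y \<in> A \<Longrightarrow> X + Y \<in> A"
    and smult_closed: "X \<in> A \<Longrightarrow> c \<cdot>\<^sub>m X \<in> A"
    and mult_closed: "X \<in> A \<Longrightarrow> Y \<in> A \<Longrightarrow> X * Y \<in> A"
    and adjoint_closed: "X \<in> A \<Longrightarrow> adj X \<in> A"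
    and hermitian_ginv: "H \<in> A \<Longrightarrow> hermitian_mat n H \<Longrightarrow> \<exists>Y \<in> A. H * Y * H = H"
begin

lemma carrier: "X \<in> A \<Longrightarrow> X \<in> carrier_mat n n"
  using subset_carrier by auto

lemma minus_closed: "X \<in> A \<Longrightarrow> Y \<in> A \<Longrightarrow> X - Y \<in> A"
proof -
  assume X: "X \<in> A" and Y: "Y \<in> A"
  have "X - Y = X + (- 1) \<cdot>\<^sub>m Y" using carrier[OF X] carrier[OF Y] by (intro eq_matI) auto
  thus ?thesis using add_closed[OF X smult_closed[OF Y]] by simp
qed

lemma kernel_subset_imp_factor:
  assumes T: "T \<in> carrier_mat n n" and X: "X \<in> A"
    and ker: "\<And>v. v \<in> carrier_vec n \<Longrightarrow> X *\<^sub>v v = 0\<^sub>v n \<Longrightarrow> T *\<^sub>v v = 0\<^sub>v n"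
  shows "\<exists>Y \<in> A. T * (Y * adj X * X) = T"
proof -
  have Xc: "X \<in> carrier_mat n n" using carrier X by auto
  define Gm where "Gm = adj X * X"
  have Gm: "Gm \<in> A" unfolding Gm_def by (intro mult_closed adjoint_closed X)
  have hGm: "hermitian_mat n Gm" unfolding hermitian_mat_def Gm_def
    using Xc by (simp add: mat_adjoint_mult[of "adj X" n n X n])
  obtain Y where Y: "Y \<in> A" and GYG: "Gm * Y * Gm = Gm" using hermitian_ginv[OF Gm hGm] by blast
  have Yc: "Y \<in> carrier_mat n n" and Gmc: "Gm \<in> carrier_mat n n" using carrier Y Gm by auto
  have "Gm * (1\<^sub>m n - Y * Gm) = 0\<^sub>m n n"
    using Gmc Yc GYG by (simp add: mult_minus_distrib_mat[of _ n n _ n] assoc_mult_mat[of _ n n _ n _ n])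
  moreover have "T *\<^sub>v v = 0\<^sub>v n" if "v \<in> carrier_vec n" "Gm *\<^sub>v v = 0\<^sub>v n" for v
    using ker gram_mult_vec_eq_0_imp_eq_0[OF Xc] that unfolding Gm_def by blast
  ultimately have "T * (1\<^sub>m n - Y * Gm) = 0\<^sub>m n n"
    using kernel_subset_imp_mult_eq_0[OF T Gmc, of "1\<^sub>m n - Y * Gm"] Yc Gmc
    by (meson minus_carrier_mat mult_carrier_mat_square one_carrier_mat)
  hence "T * (Y * Gm) = T"
    using T Yc Gmc minus_mat_eq_0_imp_eq[of T n n "T * (Y * Gm)"]
    by (simp add: mult_minus_distrib_mat[of _ n n _ n])
  moreover have "Y * Gm = Y * adj X * X" unfolding Gm_def using Yc Xc by (simp add: assoc_mult_mat[of _ n n _ n _ n])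
  ultimately show ?thesis using Y by auto
qed

lemma sandwich_factorization:
  assumes T: "T \<in> A" and hT: "hermitian_mat n T" and X: "X \<in> A"
    and ker: "\<And>v. v \<in> carrier_vec n \<Longrightarrow> X *\<^sub>v v = 0\<^sub>v n \<Longrightarrow> T *\<^sub>v v = 0\<^sub>v n"
  shows "\<exists>Op. hermitian_mat n Op \<and> Op \<in> A \<and> supp_mat n Op \<subseteq> rng_mat n X \<and> T = adj X * Op * X"
proof -
  have Xc: "X \<in> carrier_mat n n" and Tc: "T \<in> carrier_mat n n" using carrier X T by auto
  have aT: "adj T = T" using hT unfolding hermitian_mat_def by auto
  obtain Y where Y: "Y \<in> A" and TYX: "T * (Y * adj X * X) = T"
    using kernel_subset_imp_factor[OF Tc X ker] by blast
  define S where "S = Y * adj X"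
  have S: "S \<in> A" unfolding S_def by (intro mult_closed adjoint_closed X Y)
  have Sc: "S \<in> carrier_mat n n" and Yc: "Y \<in> carrier_mat n n" using carrier S Y by auto
  have TSX: "T * (S * X) = T" using TYX unfolding S_def .
  have aSXT: "adj (S * X) * T = T" using mat_adjoint_mult[OF Tc, of "S * X" n] Sc Xc TSX aT by simp
  \<comment> \<open>T = adj (S * X) * T * (S * X) = adj X * (adj S * T * S) * X\<close>
  define Op where "Op = adj S * T * S"
  have hOp: "hermitian_mat n Op"
    unfolding hermitian_mat_def Op_def using mat_adjoint_sandwich[of S n n T] Sc Tc aT by simp
  have OpA: "Op \<in> A" unfolding Op_def by (intro mult_closed adjoint_closed S T)
  have "adj X * Op * X = adj (S * X) * (T * (S * X))"
    using Xc Sc Tc mat_adjoint_mult[OF Sc Xc] by (simp add: Op_def assoc_mult_mat[of _ n n _ n _ n])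
  hence eqT: "T = adj X * Op * X" unfolding TSX aSXT by simp
  have "supp_mat n Op = rng_mat n (adj S * (T * S))"
    using hermitian_supp_eq_rng[OF hOp] Sc Tc by (simp add: Op_def assoc_mult_mat[of _ n n _ n _ n])
  also have "\<dots> \<subseteq> rng_mat n (X * adj Y)"
    using rng_mat_mult_subset[of "adj S" n "T * S"] mat_adjoint_mult[of Y n n "adj X" n] Sc Tc Yc Xc
    by (simp add: S_def)
  also have "\<dots> \<subseteq> rng_mat n X" using Xc Yc by (intro rng_mat_mult_subset) auto
  finally show ?thesis using hOp OpA eqT by blast
qed


lemma perturbation_imp_sandwich:
  assumes n: "n = dK * dH" and C: "C = {R \<in> A. psd n R \<and> ptrace_K dK dH R = K0}"
    and R: "R \<in> C" and X: "X \<in> A" and RQX: "R = adj X * Q * X" and Q: "Q \<in> carrier_mat n n"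
    and T: "T \<in> carrier_mat n n" and pert: "perturbation C R T"
  shows "hermitian_mat n T \<and> T \<in> A \<and> ptrace_K dK dH T = 0\<^sub>m dH dH \<and>
    (\<exists>Op. hermitian_mat n Op \<and> Op \<in> A \<and> Op \<noteq> 0\<^sub>m n n \<and> supp_mat n Op \<subseteq> rng_mat n X \<and> T = adj X * Op * X)"
proof -
  from pert obtain t :: real where t: "t > 0" and Rp: "R + complex_of_real t \<cdot>\<^sub>m T \<in> C"
    and Rm: "R - complex_of_real t \<cdot>\<^sub>m T \<in> C" and Tnz: "T \<noteq> 0\<^sub>m n n"
    unfolding perturbation_def using T by auto
  let ?c = "complex_of_real t"
  have RA: "R \<in> A" and hR: "hermitian_mat n R" and Rc: "R \<in> carrier_mat n n"
    using R C carrier unfolding psd_def by auto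
  have hT: "hermitian_mat n T"
    by (rule hermitian_of_add_smult[OF hR _ T]) (use Rp C t in \<open>auto simp: psd_def\<close>)
  have "T = (1 / ?c) \<cdot>\<^sub>m ((R + ?c \<cdot>\<^sub>m T) - R)" using Rc T t by (intro eq_matI) auto
  hence TA: "T \<in> A" using Rp C RA by (metis (no_types, lifting) mem_Collect_eq minus_closed smult_closed)
  have "ptrace_K dK dH R + ?c \<cdot>\<^sub>m ptrace_K dK dH T = ptrace_K dK dH R"
    using ptrace_K_add_smult[of R dK dH T ?c] Rc T Rp R C n by auto
  hence ptT: "ptrace_K dK dH T = 0\<^sub>m dH dH" using t by (intro add_smult_eq_self_imp_eq_0) auto
  have "T *\<^sub>v v = 0\<^sub>v n" if v: "v \<in> carrier_vec n" and Xv: "X *\<^sub>v v = 0\<^sub>v n" for v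
  proof (rule psd_add_minus_smult_kernel[OF _ _ _ Rc T v])
    show "R *\<^sub>v v = 0\<^sub>v n" using RQX Xv v carrier[OF X] Q by (simp add: assoc_mult_mat_vec[of _ n n _ n])
  qed (use Rp Rm C t in auto)
  then obtain Op where Op: "hermitian_mat n Op" "Op \<in> A" "supp_mat n Op \<subseteq> rng_mat n X"
    and eqT: "T = adj X * Op * X"
    using sandwich_factorization[OF TA hT X] by blast
  have "Op \<noteq> 0\<^sub>m n n" using eqT Tnz carrier[OF X] by auto
  thus ?thesis using hT TA ptT Op eqT by blast
qed

lemma sandwich_imp_perturbation:
  assumes n: "n = dK * dH" and C: "C = {R \<in> A. psd n R \<and> ptrace_K dK dH R = K0}"
    and R: "R \<in> C" and X: "X \<in> A" and Q: "psd n Q" and XQ: "rng_mat n X = supp_mat n Q"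
    and RQX: "R = adj X * Q * X"
    and T: "T \<in> A" and ptT: "ptrace_K dK dH T = 0\<^sub>m dH dH"
    and Op: "hermitian_mat n Op" and Opnz: "Op \<noteq> 0\<^sub>m n n" and sub: "supp_mat n Op \<subseteq> rng_mat n X"
    and eqT: "T = adj X * Op * X"
  shows "perturbation C R T"
proof -
  have Xc: "X \<in> carrier_mat n n" and Tc: "T \<in> carrier_mat n n" using carrier X T by auto
  have Rc: "R \<in> carrier_mat n n" and RA: "R \<in> A" and ptR: "ptrace_K dK dH R = K0"
    using R C carrier by auto
  have "rng_mat n Op \<subseteq> rng_mat n Q"
    using sub XQ hermitian_supp_eq_rng[OF Op] Q unfolding psd_def by (simp add: hermitian_supp_eq_rng)
  then obtain t where t: "t > 0" and psd_pm: "psd n (R + complex_of_real t \<cdot>\<^sub>m T)"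
    "psd n (R - complex_of_real t \<cdot>\<^sub>m T)"
    using psd_sandwich_perturbation[OF Xc Q Op] unfolding RQX eqT by blast
  have "ptrace_K dK dH (R + c \<cdot>\<^sub>m T) = K0" for c
    using ptrace_K_add_smult[of R dK dH T] ptrace_K_carrier[of dK dH R] Rc Tc ptR ptT n by simp
  hence "ptrace_K dK dH (R - complex_of_real t \<cdot>\<^sub>m T) = K0" "ptrace_K dK dH (R + complex_of_real t \<cdot>\<^sub>m T) = K0"
    using minus_smult_eq_add_smult[OF Rc Tc, of t] by auto
  moreover have "R + complex_of_real t \<cdot>\<^sub>m T \<in> A" "R - complex_of_real t \<cdot>\<^sub>m T \<in> A"
    using RA T by (auto intro: add_closed minus_closed smult_closed)
  moreover have "T \<noteq> 0\<^sub>m n n" using sandwich_eq_0_imp_eq_0[OF Op sub Xc] Opnz eqT by auto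
  ultimately show ?thesis unfolding perturbation_def using t psd_pm C Tc by auto
qed

lemma perturbation_iff_sandwich:
  assumes n: "n = dK * dH" and C: "C = {R \<in> A. psd n R \<and> ptrace_K dK dH R = K0}"
    and R: "R \<in> C" and X: "X \<in> A" and Q: "psd n Q" and XQ: "rng_mat n X = supp_mat n Q"
    and RQX: "R = adj X * Q * X" and T: "T \<in> carrier_mat n n"
  shows "perturbation C R T \<longleftrightarrow> hermitian_mat n T \<and> T \<in> A \<and> ptrace_K dK dH T = 0\<^sub>m dH dH \<and>
    (\<exists>Op. hermitian_mat n Op \<and> Op \<in> A \<and> Op \<noteq> 0\<^sub>m n n \<and> supp_mat n Op \<subseteq> rng_mat n X \<and> T = adj X * Op * X)"
  using perturbation_imp_sandwich[OF n C R X RQX _ T] sandwich_imp_perturbation[OF n C R X Q XQ RQX] Q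
  unfolding psd_def hermitian_mat_def by blast

end

section \<open>Isotypic blocks\<close>

lemma dim_kron[simp]: "dim_row (kron A B) = dim_row A * dim_row B" "dim_col (kron A B) = dim_col A * dim_col B"
  unfolding kron_def by auto

lemma index_kron: "r < dim_row A * dim_row B \<Longrightarrow> c < dim_col A * dim_col B \<Longrightarrow>
  kron A B $$ (r,c) = A $$ (r div dim_row B, c div dim_col B) * B $$ (r mod dim_row B, c mod dim_col B)"
  unfolding kron_def by auto

lemma kron_carrier[simp]: "A \<in> carrier_mat a b \<Longrightarrow> B \<in> carrier_mat c d \<Longrightarrow> kron A B \<in> carrier_mat (a*c) (b*d)"
  unfolding carrier_mat_def by auto

lemma mat_adjoint_kron_one:
  assumes M: "M \<in> carrier_mat m m"
  shows "adj (kron (1\<^sub>m d) M) = kron (1\<^sub>m d) (adj M)"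
proof (rule eq_matI)
  fix i j assume i: "i < dim_row (kron (1\<^sub>m d) (adj M))" and j: "j < dim_col (kron (1\<^sub>m d) (adj M))"
  have i': "i < d * m" and j': "j < d * m" using i j M by auto
  have m: "m > 0" using i' by (cases m) auto
  have "i div m < d" "j div m < d" using i' j' less_mult_imp_div_less by auto
  moreover have "i mod m < m" "j mod m < m" using m by auto
  ultimately show "adj (kron (1\<^sub>m d) M) $$ (i, j) = kron (1\<^sub>m d) (adj M) $$ (i, j)"
    using i' j' M by (auto simp: index_kron)
qed (use M in auto)

lemma mat_adjoint_four_block:
  assumes A: "A \<in> carrier_mat n1 m1" and B: "B \<in> carrier_mat n1 m2"
    and C: "C \<in> carrier_mat n2 m1" and D: "D \<in> carrier_mat n2 m2"
  shows "adj (four_block_mat A B C D) = four_block_mat (adj A) (adj C) (adj B) (adj D)"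
  by (rule eq_matI) (use A B C D in auto)

lemma mat_adjoint_zero[simp]: "adj (0\<^sub>m n m) = 0\<^sub>m m n"
  by (intro eq_matI) auto

lemma mat_adjoint_diag_block: "adj (diag_block_mat As) = diag_block_mat (map adj As)"
proof (induct As)
  case Nil thus ?case by simp
next
  case (Cons A As)
  let ?D = "diag_block_mat As"
  have "adj (diag_block_mat (A # As)) =
    four_block_mat (adj A) (adj (0\<^sub>m (dim_row ?D) (dim_col A))) (adj (0\<^sub>m (dim_row A) (dim_col ?D))) (adj ?D)"
    unfolding diag_block_mat.simps Let_def
    by (rule mat_adjoint_four_block) auto
  also have "\<dots> = diag_block_mat (map adj (A # As))"
  proof -
    have d: "dim_col (diag_block_mat (map adj As)) = dim_row ?D" "dim_row (diag_block_mat (map adj As)) = dim_col ?D"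
      unfolding Cons[symmetric] by simp_all
    show ?thesis unfolding list.map diag_block_mat.simps Let_def d Cons by simp
  qed
  finally show ?case .
qed

definition block_sizes :: "nat list \<Rightarrow> nat list \<Rightarrow> nat list" where
  "block_sizes ds ms = map (\<lambda>k. ds ! k * ms ! k) [0..<length ds]"

definition block_shaped :: "nat list \<Rightarrow> nat list \<Rightarrow> complex mat list \<Rightarrow> bool" where
  "block_shaped ds ms Ms \<longleftrightarrow> length Ms = length ds \<and> (\<forall>k < length ds. Ms ! k \<in> carrier_mat (ms ! k) (ms ! k))"

lemma block_list_dims:
  assumes "block_shaped ds ms Ms"
  shows "map dim_col (map (\<lambda>k. kron (1\<^sub>m (ds ! k)) (Ms ! k)) [0..<length ds]) = block_sizes ds ms"
    "map dim_row (map (\<lambda>k. kron (1\<^sub>m (ds ! k)) (Ms ! k)) [0..<length ds]) = block_sizes ds ms"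
  using assms unfolding block_sizes_def block_shaped_def by auto

lemma block_op_carrier:
  "block_shaped ds ms Ms \<Longrightarrow> block_op ds Ms \<in> carrier_mat (sum_list (block_sizes ds ms)) (sum_list (block_sizes ds ms))"
  using block_list_dims[of ds ms Ms] unfolding block_op_def carrier_mat_def by (simp add: dim_diag_block_mat)

lemma mat_adjoint_block_op:
  "block_shaped ds ms Ms \<Longrightarrow> adj (block_op ds Ms) = block_op ds (map adj Ms)"
  unfolding block_op_def mat_adjoint_diag_block map_map block_shaped_def
  by (intro arg_cong[where f=diag_block_mat] map_cong) (auto simp: mat_adjoint_kron_one)

lemma block_shaped_map_adjoint: "block_shaped ds ms Ms \<Longrightarrow> block_shaped ds ms (map adj Ms)"
  unfolding block_shaped_def by auto

lemma sum_list_take_nth: "k < length (xs :: nat list) \<Longrightarrow> sum_list (take k xs) + xs ! k \<le> sum_list xs"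
proof (induct xs arbitrary: k)
  case Nil thus ?case by simp
next
  case (Cons x xs) thus ?case by (cases k) auto
qed

lemma index_diag_block_mat_col:
  assumes k: "k < length As" and c: "c < dim_col (As ! k)" and r: "r < sum_list (map dim_row As)"
  shows "diag_block_mat As $$ (r, sum_list (map dim_col (take k As)) + c) =
    (if sum_list (map dim_row (take k As)) \<le> r \<and> r < sum_list (map dim_row (take k As)) + dim_row (As ! k)
     then As ! k $$ (r - sum_list (map dim_row (take k As)), c) else 0)"
  using assms
proof (induct As arbitrary: k r)
  case Nil thus ?case by simp
next
  case (Cons A As k r)
  let ?D = "diag_block_mat As"
  have colb: "sum_list (map dim_col (take k (A # As))) + c < dim_col A + dim_col ?D"
  proof -
    have "sum_list (take k (map dim_col (A # As))) + (map dim_col (A # As)) ! k \<le> sum_list (map dim_col (A # As))"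
      by (rule sum_list_take_nth) (use Cons.prems in simp)
    hence "sum_list (map dim_col (take k (A # As))) + dim_col ((A # As) ! k) \<le> dim_col A + dim_col ?D"
      unfolding take_map[symmetric] nth_map[OF Cons.prems(1)] by (simp add: dim_diag_block_mat)
    thus ?thesis using Cons.prems(2) by linarith
  qed
  have rowb: "r < dim_row A + dim_row ?D" using Cons.prems by (simp add: dim_diag_block_mat)
  show ?case
  proof (cases k)
    case 0
    thus ?thesis using Cons.prems colb rowb unfolding diag_block_mat.simps Let_def
      by (subst index_mat_four_block) auto
  next
    case (Suc k')
    have k': "k' < length As" "c < dim_col (As ! k')" using Cons.prems Suc by auto
    show ?thesis
    proof (cases "r < dim_row A")
      case True
      thus ?thesis using Cons.prems colb rowb Suc unfolding diag_block_mat.simps Let_def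
        by (subst index_mat_four_block) auto
    next
      case False
      have r': "r - dim_row A < sum_list (map dim_row As)" using Cons.prems False by simp
      have "diag_block_mat (A # As) $$ (r, sum_list (map dim_col (take k (A # As))) + c)
        = ?D $$ (r - dim_row A, sum_list (map dim_col (take k' As)) + c)"
        using Cons.prems colb rowb Suc False unfolding diag_block_mat.simps Let_def
        by (subst index_mat_four_block) (auto simp: add.assoc)
      also have "\<dots> = (if sum_list (map dim_row (take k' As)) \<le> r - dim_row A \<and> r - dim_row A < sum_list (map dim_row (take k' As)) + dim_row (As ! k')
     then As ! k' $$ (r - dim_row A - sum_list (map dim_row (take k' As)), c) else 0)"
        by (rule Cons.hyps[OF k' r'])
      also have "\<dots> = (if sum_list (map dim_row (take k (A # As))) \<le> r \<and> r < sum_list (map dim_row (take k (A # As))) + dim_row ((A # As) ! k)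
     then (A # As) ! k $$ (r - sum_list (map dim_row (take k (A # As))), c) else 0)"
        using False Suc by (auto simp: diff_diff_add)
      finally show ?thesis .
    qed
  qed
qed

definition embed_mat :: "nat \<Rightarrow> nat \<Rightarrow> nat \<Rightarrow> complex mat" where
  "embed_mat n m off = mat n m (\<lambda>(r,c). if r = off + c then 1 else 0)"

lemma embed_mat_carrier[simp]: "embed_mat n m off \<in> carrier_mat n m"
  unfolding embed_mat_def by auto

lemma dim_embed_mat[simp]: "dim_row (embed_mat n m off) = n" "dim_col (embed_mat n m off) = m"
  unfolding embed_mat_def by auto

lemma embed_mat_adjoint_mult_self: assumes "off + m \<le> n" shows "adj (embed_mat n m off) * embed_mat n m off = 1\<^sub>m m"
proof (rule eq_matI)
  fix i j assume i: "i < dim_row (1\<^sub>m m)" and j: "j < dim_col (1\<^sub>m m)"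
  have "(adj (embed_mat n m off) * embed_mat n m off) $$ (i,j) = (\<Sum>r<n. (if r = off + i then 1 else 0) * (if r = off + j then 1 else 0))"
    using i j by (auto simp: scalar_prod_def embed_mat_def lessThan_atLeast0 intro!: sum.cong)
  also have "\<dots> = (\<Sum>r<n. if r = off + i then (if off + i = off + j then 1 else 0) else 0)"
    by (rule sum.cong) auto
  also have "\<dots> = (if i = j then 1 else 0)" using i assms by (simp add: sum.delta)
  finally show "(adj (embed_mat n m off) * embed_mat n m off) $$ (i,j) = 1\<^sub>m m $$ (i,j)" using i j by simp
qed auto

lemma index_mult_embed_mat:
  assumes M: "M \<in> carrier_mat k n" and r: "r < k" and c: "c < m" and oc: "off + m \<le> n"
  shows "(M * embed_mat n m off) $$ (r,c) = M $$ (r, off + c)"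
proof -
  have "(M * embed_mat n m off) $$ (r,c) = (\<Sum>t<n. M $$ (r,t) * (if t = off + c then 1 else 0))"
    using M r c by (simp add: scalar_prod_def embed_mat_def lessThan_atLeast0)
  also have "\<dots> = (\<Sum>t<n. if t = off + c then M $$ (r,t) else 0)" by (rule sum.cong) auto
  also have "\<dots> = M $$ (r, off + c)" using c oc by (simp add: sum.delta)
  finally show ?thesis .
qed

lemma index_embed_mat_mult:
  assumes M: "M \<in> carrier_mat m k" and r: "r < n" and c: "c < k"
  shows "(embed_mat n m off * M) $$ (r,c) = (if off \<le> r \<and> r < off + m then M $$ (r - off, c) else 0)"
proof -
  have "(embed_mat n m off * M) $$ (r,c) = (\<Sum>t<m. (if r = off + t then 1 else 0) * M $$ (t,c))"
    using M r c by (simp add: scalar_prod_def embed_mat_def lessThan_atLeast0)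
  also have "\<dots> = (\<Sum>t<m. if t = r - off then (if off \<le> r then M $$ (t,c) else 0) else 0)"
    by (rule sum.cong) auto
  also have "\<dots> = (if off \<le> r \<and> r < off + m then M $$ (r - off, c) else 0)"
    by (simp add: sum.delta) linarith
  finally show ?thesis .
qed


lemma index_kron_one_first_block:
  assumes M: "M \<in> carrier_mat m m" and d: "d > 0" and x: "x < d * m" and c: "c < m"
  shows "kron (1\<^sub>m d) M $$ (x, c) = (if x < m then M $$ (x, c) else 0)"
proof -
  have "m \<le> d * m" using d by simp
  hence cm: "c < d * m" using c by linarith
  have "kron (1\<^sub>m d) M $$ (x, c) = 1\<^sub>m d $$ (x div m, c div m) * M $$ (x mod m, c mod m)"
    using M x cm by (simp add: index_kron)
  also have "\<dots> = (if x < m then M $$ (x, c) else 0)"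
  proof -
    have xd: "x div m < d" using x less_mult_imp_div_less by auto
    have "c div m = 0" "c mod m = c" using c by auto
    moreover have "(x div m = 0) = (x < m)" using c by (simp add: div_eq_0_iff)
    ultimately show ?thesis using xd d by auto
  qed
  finally show ?thesis .
qed

lemma index_block_op_col:
  assumes Ms: "block_shaped ds ms Ms" and k: "k < length ds" and dpos: "ds ! k > 0"
    and r: "r < sum_list (block_sizes ds ms)" and c: "c < ms ! k"
  shows "block_op ds Ms $$ (r, sum_list (take k (block_sizes ds ms)) + c) =
    (if sum_list (take k (block_sizes ds ms)) \<le> r \<and> r < sum_list (take k (block_sizes ds ms)) + ms ! k
     then Ms ! k $$ (r - sum_list (take k (block_sizes ds ms)), c) else 0)"
    (is "_ = (if ?off \<le> r \<and> r < ?off + ms ! k then _ else _)")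
proof -
  let ?As = "map (\<lambda>k. kron (1\<^sub>m (ds ! k)) (Ms ! k)) [0..<length ds]"
  let ?M = "Ms ! k"
  have Mk: "?M \<in> carrier_mat (ms ! k) (ms ! k)" using Ms k unfolding block_shaped_def by auto
  have mdm: "ms ! k \<le> ds ! k * ms ! k" using dpos by simp
  have tk: "map dim_col (take k ?As) = take k (block_sizes ds ms)"
    "map dim_row (take k ?As) = take k (block_sizes ds ms)"
    by (simp_all only: take_map[symmetric] block_list_dims[OF Ms])
  have Ak: "?As ! k = kron (1\<^sub>m (ds ! k)) ?M" using k by simp
  have cA: "c < dim_col (?As ! k)" unfolding Ak using Mk c mdm by (simp del: One_nat_def; linarith)
  have rA: "r < sum_list (map dim_row ?As)" using r block_list_dims(2)[OF Ms] by simp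
  have "block_op ds Ms $$ (r, ?off + c) = (if ?off \<le> r \<and> r < ?off + ds ! k * ms ! k
      then kron (1\<^sub>m (ds ! k)) ?M $$ (r - ?off, c) else 0)"
    using index_diag_block_mat_col[of k ?As c r] k cA rA Mk unfolding tk Ak block_op_def[symmetric] by simp
  also have "\<dots> = (if ?off \<le> r \<and> r < ?off + ms ! k then ?M $$ (r - ?off, c) else 0)"
  proof (cases "?off \<le> r \<and> r < ?off + ds ! k * ms ! k")
    case True
    thus ?thesis using index_kron_one_first_block[OF Mk dpos _ c, of "r - ?off"] by auto
  next
    case False
    moreover have "\<not> (?off \<le> r \<and> r < ?off + ms ! k)" using False mdm by linarith
    ultimately show ?thesis by (simp only: if_not_P if_False)
  qed
  finally show ?thesis .
qed

lemma block_op_mult_embed_mat: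
  assumes Ms: "block_shaped ds ms Ms" and k: "k < length ds" and dpos: "ds ! k > 0"
  shows "block_op ds Ms * embed_mat (sum_list (block_sizes ds ms)) (ms ! k) (sum_list (take k (block_sizes ds ms)))
       = embed_mat (sum_list (block_sizes ds ms)) (ms ! k) (sum_list (take k (block_sizes ds ms))) * Ms ! k"
    (is "?B * ?J = ?J * ?M")
proof -
  let ?S = "sum_list (block_sizes ds ms)"
  let ?off = "sum_list (take k (block_sizes ds ms))"
  have Mk: "?M \<in> carrier_mat (ms ! k) (ms ! k)" using Ms k unfolding block_shaped_def by auto
  have B: "?B \<in> carrier_mat ?S ?S" by (rule block_op_carrier[OF Ms])
  have "?off + ds ! k * ms ! k \<le> ?S"
    using sum_list_take_nth[of k "block_sizes ds ms"] k by (simp add: block_sizes_def)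
  moreover have "ms ! k \<le> ds ! k * ms ! k" using dpos by simp
  ultimately have off: "?off + ms ! k \<le> ?S" by linarith
  show ?thesis
  proof (rule eq_matI)
    fix r c assume "r < dim_row (?J * ?M)" and "c < dim_col (?J * ?M)"
    hence r: "r < ?S" and c: "c < ms ! k" using Mk by auto
    have "(?B * ?J) $$ (r, c) = ?B $$ (r, ?off + c)" by (rule index_mult_embed_mat[OF B r c off])
    also have "\<dots> = (?J * ?M) $$ (r, c)"
      unfolding index_block_op_col[OF Ms k dpos r c] index_embed_mat_mult[OF Mk r c] ..
    finally show "(?B * ?J) $$ (r, c) = (?J * ?M) $$ (r, c)" .
  qed (use B Mk in auto)
qed

lemma unitary_conj_intertwine:
  assumes W: "unitary_mat N W" and B: "B \<in> carrier_mat N N" and J: "J \<in> carrier_mat N m"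
    and M: "M \<in> carrier_mat m m" and BJ: "B * J = J * M"
  shows "(W * B * adj W) * (W * J) = (W * J) * M"
proof -
  have Wc: "W \<in> carrier_mat N N" and WW: "adj W * W = 1\<^sub>m N" using W unfolding unitary_mat_def by auto
  have aW: "adj W \<in> carrier_mat N N" using Wc by simp
  have "(W * B * adj W) * (W * J) = W * B * (adj W * (W * J))"
    by (rule assoc_mult_mat) (use Wc B aW J in auto)
  also have "adj W * (W * J) = (adj W * W) * J" by (rule assoc_mult_mat[symmetric]) (use Wc aW J in auto)
  also have "\<dots> = J" unfolding WW using J by simp
  also have "W * B * J = W * (B * J)" by (rule assoc_mult_mat) (use Wc B J in auto)
  also have "\<dots> = W * (J * M)" unfolding BJ ..
  also have "\<dots> = W * J * M" by (rule assoc_mult_mat[symmetric]) (use Wc J M in auto)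
  finally show ?thesis .
qed

lemma isometry_intertwine_adjoint:
  assumes F: "F \<in> carrier_mat n m" and FF: "adj F * F = 1\<^sub>m m"
    and Op: "hermitian_mat n Op" and Ok: "Ok \<in> carrier_mat m m" and OpF: "Op * F = F * Ok"
  shows "adj F * Op = Ok * adj F"
proof -
  have Oc: "Op \<in> carrier_mat n n" and aO: "adj Op = Op" using Op unfolding hermitian_mat_def by auto
  have aFc: "adj F \<in> carrier_mat m n" using F by simp
  have "adj F * Op * F = adj F * (F * Ok)" using aFc Oc F OpF by (simp add: assoc_mult_mat[of _ m n _ n _ m])
  also have "\<dots> = Ok" using aFc F Ok FF by (simp add: assoc_mult_mat[of _ m n _ m _ m, symmetric])
  finally have "adj Ok = Ok" using mat_adjoint_sandwich[OF F Oc] aO by metis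
  thus ?thesis using mat_adjoint_mult[OF Oc F] mat_adjoint_mult[OF F Ok] OpF aO by simp
qed

lemma isometry_compression_supp_subset_rng:
  assumes F: "F \<in> carrier_mat n m" and FF: "adj F * F = 1\<^sub>m m"
    and Op: "hermitian_mat n Op" and Ok: "Ok \<in> carrier_mat m m" and OpF: "Op * F = F * Ok"
    and X: "X \<in> carrier_mat n n" and Xk: "Xk \<in> carrier_mat m m" and XF: "adj X * F = F * adj Xk"
    and sub: "supp_mat n Op \<subseteq> rng_mat n X"
  shows "supp_mat m Ok \<subseteq> rng_mat m Xk"
proof
  have Oc: "Op \<in> carrier_mat n n" using Op unfolding hermitian_mat_def by auto
  have aFc: "adj F \<in> carrier_mat m n" using F by simp
  have FOp: "adj F * Op = Ok * adj F" by (rule isometry_intertwine_adjoint[OF F FF Op Ok OpF])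
  have XkF: "adj F * X = Xk * adj F"
    using mat_adjoint_mult[of "adj X" n n F m] mat_adjoint_mult[OF F, of "adj Xk" m] XF X Xk F by simp
  fix v assume "v \<in> supp_mat m Ok"
  hence v: "v \<in> carrier_vec m" and orth: "\<And>x. x \<in> ker_mat m Ok \<Longrightarrow> v \<bullet>c x = 0"
    unfolding supp_mat_def by auto
  have "F *\<^sub>v v \<in> supp_mat n Op" unfolding supp_mat_def
  proof (intro CollectI conjI ballI)
    show "F *\<^sub>v v \<in> carrier_vec n" using F v by auto
    fix w assume "w \<in> ker_mat n Op"
    hence w: "w \<in> carrier_vec n" and Ow: "Op *\<^sub>v w = 0\<^sub>v n" unfolding ker_mat_def using Oc by auto
    have "Ok *\<^sub>v (adj F *\<^sub>v w) = adj F *\<^sub>v (Op *\<^sub>v w)"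
      using FOp aFc Ok Oc w assoc_mult_mat_vec[of Ok m m "adj F" n w] assoc_mult_mat_vec[of "adj F" m n Op n w]
      by simp
    hence "adj F *\<^sub>v w \<in> ker_mat m Ok" unfolding ker_mat_def using Ow aFc Ok w by auto
    thus "(F *\<^sub>v v) \<bullet>c w = 0" using orth cscalar_prod_adjoint[OF F v w] by simp
  qed
  then obtain z where z: "z \<in> carrier_vec n" and ez: "F *\<^sub>v v = X *\<^sub>v z"
    using sub unfolding rng_mat_def by auto
  have "v = adj F *\<^sub>v (F *\<^sub>v v)" using FF v assoc_mult_mat_vec[of "adj F" m n F m v] F by simp
  also have "\<dots> = Xk *\<^sub>v (adj F *\<^sub>v z)"
    unfolding ez using XkF X Xk aFc z assoc_mult_mat_vec[of "adj F" m n X n z]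
      assoc_mult_mat_vec[of Xk m m "adj F" n z] by simp
  finally show "v \<in> rng_mat m Xk" unfolding rng_mat_def using aFc z by auto
qed

lemma block_supp_subset_rng:
  assumes W: "unitary_mat N W" and SN: "sum_list (block_sizes ds ms) = N"
    and dpos: "\<forall>k<length ds. ds ! k > 0"
    and Os: "block_shaped ds ms Os" and Xs: "block_shaped ds ms Xs"
    and OpE: "Op = W * block_op ds Os * adj W" and XE: "X = W * block_op ds Xs * adj W"
    and Op: "hermitian_mat N Op" and sub: "supp_mat N Op \<subseteq> rng_mat N X" and k: "k < length ds"
  shows "supp_mat (ms ! k) (Os ! k) \<subseteq> rng_mat (ms ! k) (Xs ! k)"
proof -
  let ?m = "ms ! k"
  let ?off = "sum_list (take k (block_sizes ds ms))"
  define J where "J = embed_mat N ?m ?off"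
  have Wc: "W \<in> carrier_mat N N" and WW: "adj W * W = 1\<^sub>m N" using W unfolding unitary_mat_def by auto
  have Jc: "J \<in> carrier_mat N ?m" unfolding J_def by simp
  have Ok: "Os ! k \<in> carrier_mat ?m ?m" and Xk: "Xs ! k \<in> carrier_mat ?m ?m"
    using Os Xs k unfolding block_shaped_def by auto
  have Bo: "block_op ds Os \<in> carrier_mat N N" and Bx: "block_op ds Xs \<in> carrier_mat N N"
    and Bax: "block_op ds (map adj Xs) \<in> carrier_mat N N"
    using block_op_carrier[OF Os] block_op_carrier[OF Xs] block_op_carrier[OF block_shaped_map_adjoint[OF Xs]] SN
    by auto
  have "?off + ds ! k * ?m \<le> N"
    using sum_list_take_nth[of k "block_sizes ds ms"] k SN by (simp add: block_sizes_def)
  moreover have "?m \<le> ds ! k * ?m" using dpos k by (auto simp: Suc_le_eq)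
  ultimately have "adj J * J = 1\<^sub>m ?m" unfolding J_def by (intro embed_mat_adjoint_mult_self) linarith
  hence FF: "adj (W * J) * (W * J) = 1\<^sub>m ?m"
    using Wc Jc WW mat_adjoint_mult[OF Wc Jc]
    by (simp add: assoc_mult_mat[of "adj J" ?m N _ N _ ?m] assoc_mult_mat[of "adj W" N N W N J ?m, symmetric])
  have OpF: "Op * (W * J) = (W * J) * Os ! k" unfolding OpE
    by (rule unitary_conj_intertwine[OF W Bo Jc Ok])
      (use block_op_mult_embed_mat[OF Os k] dpos k SN in \<open>simp add: J_def\<close>)
  have "adj X = W * block_op ds (map adj Xs) * adj W"
    using mat_adjoint_sandwich[of "adj W" N N "block_op ds Xs"] Wc Bx mat_adjoint_block_op[OF Xs]
    unfolding XE by simp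
  moreover have "block_op ds (map adj Xs) * J = J * adj (Xs ! k)"
    using block_op_mult_embed_mat[OF block_shaped_map_adjoint[OF Xs] k] dpos k SN Xs
    by (simp add: J_def block_shaped_def)
  ultimately have "adj X * (W * J) = (W * J) * adj (Xs ! k)"
    using unitary_conj_intertwine[OF W Bax Jc, of "adj (Xs ! k)"] Xk by simp
  moreover have "X \<in> carrier_mat N N" unfolding XE using Wc Bx by auto
  ultimately show ?thesis
    using isometry_compression_supp_subset_rng[OF _ FF Op Ok OpF _ Xk _ sub] Wc Jc by auto
qed

section \<open>The commutant of the representation\<close>

lemma commute_add:
  fixes K A B :: "complex mat"
  shows "K \<in> carrier_mat n n \<Longrightarrow> A \<in> carrier_mat n n \<Longrightarrow> B \<in> carrier_mat n n \<Longrightarrow>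
    K * A = A * K \<Longrightarrow> K * B = B * K \<Longrightarrow> K * (A + B) = (A + B) * K"
  by (simp add: mult_add_distrib_mat[of K n n A n B] add_mult_distrib_mat[of A n n B K n])

lemma commute_smult:
  fixes K A :: "complex mat"
  shows "K \<in> carrier_mat n n \<Longrightarrow> A \<in> carrier_mat n n \<Longrightarrow> K * A = A * K \<Longrightarrow>
    K * (c \<cdot>\<^sub>m A) = (c \<cdot>\<^sub>m A) * K"
  by (simp add: mult_smult_distrib[of K n n A n] mult_smult_assoc_mat[of A n n K n])

lemma commute_mult:
  fixes K A B :: "complex mat"
  assumes K: "K \<in> carrier_mat n n" and A: "A \<in> carrier_mat n n" and B: "B \<in> carrier_mat n n"
    and KA: "K * A = A * K" and KB: "K * B = B * K"
  shows "K * (A * B) = (A * B) * K"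
proof -
  have "K * (A * B) = (K * A) * B" using K A B by (rule assoc_mult_mat[symmetric])
  also have "\<dots> = A * (K * B)" unfolding KA using A K B by (rule assoc_mult_mat)
  also have "\<dots> = (A * B) * K" unfolding KB using A B K by (rule assoc_mult_mat[symmetric])
  finally show ?thesis .
qed

lemma rep_tensor_carrier:
  assumes "unitary_rep G dH U" and "unitary_rep G dK V" and "g \<in> carrier G"
  shows "kron (V g) (cconj (U g)) \<in> carrier_mat (dK * dH) (dK * dH)"
  using assms unfolding unitary_rep_def unitary_mat_def cconj_def by (intro kron_carrier) auto

lemma commutant_ginv_star_algebra:
  assumes U: "unitary_rep G dH U" and V: "unitary_rep G dK V"
    and W: "W \<in> carrier_mat (dK * dH) (dK * dH)" and SN: "sum_list (block_sizes ds ms) = dK * dH"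
    and comm: "commutant G dK dH V U = {W * block_op ds Ms * adj W | Ms. block_shaped ds ms Ms}"
  shows "ginv_star_algebra (dK * dH) (commutant G dK dH V U)"
proof
  let ?A = "commutant G dK dH V U" and ?n = "dK * dH"
  let ?K = "\<lambda>g. kron (V g) (cconj (U g))"
  have K: "?K g \<in> carrier_mat ?n ?n" if "g \<in> carrier G" for g by (rule rep_tensor_carrier[OF U V that])
  show "?A \<subseteq> carrier_mat ?n ?n" unfolding commutant_def by auto
  fix X Y assume X: "X \<in> ?A" and Y: "Y \<in> ?A"
  show "X + Y \<in> ?A" "X * Y \<in> ?A"
    using X Y K commute_add[of _ ?n X Y] commute_mult[of _ ?n X Y] unfolding commutant_def by auto
  show "c \<cdot>\<^sub>m X \<in> ?A" for c
    using X K commute_smult[of _ ?n X] unfolding commutant_def by auto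
  obtain Ms where XE: "X = W * block_op ds Ms * adj W" and Ms: "block_shaped ds ms Ms"
    using X comm by auto
  have "adj X = W * block_op ds (map adj Ms) * adj W"
    using mat_adjoint_sandwich[of "adj W" ?n ?n "block_op ds Ms"] W block_op_carrier[OF Ms] SN
      mat_adjoint_block_op[OF Ms] unfolding XE by simp
  thus "adj X \<in> ?A" using comm block_shaped_map_adjoint[OF Ms] by auto
next
  fix H assume H: "H \<in> commutant G dK dH V U" and hH: "hermitian_mat (dK * dH) H"
  obtain Y where "Y \<in> bicommutant (dK * dH) H" and "H * Y * H = H"
    using hermitian_ginv_bicommutant[OF hH] by blast
  moreover have "Y \<in> commutant G dK dH V U" using calculation(1) H rep_tensor_carrier[OF U V]
    unfolding commutant_def bicommutant_def by auto
  ultimately show "\<exists>Y \<in> commutant G dK dH V U. H * Y * H = H" by blast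
qed

lemma sum_block_sizes:
  assumes G: "group G" and U: "unitary_rep G dH U" and V: "unitary_rep G dK V"
    and W: "W \<in> carrier_mat (dK * dH) (dK * dH)"
    and irr: "\<forall>k < length ds. irreducible_rep G (ds ! k) (P k)"
    and W_dec: "\<forall>g \<in> carrier G. adj W * kron (V g) (cconj (U g)) * W =
                  diag_block_mat (map (\<lambda>k. kron (P k g) (1\<^sub>m (ms ! k))) [0..<length ds])"
  shows "sum_list (block_sizes ds ms) = dK * dH"
proof -
  have one: "\<one>\<^bsub>G\<^esub> \<in> carrier G" using G by (simp add: group.is_monoid monoid.one_closed)
  have "dim_row (P k \<one>\<^bsub>G\<^esub>) = ds ! k" if "k < length ds" for k
    using irr that one unfolding irreducible_rep_def unitary_rep_def unitary_mat_def carrier_mat_def by auto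
  hence "map dim_row (map (\<lambda>k. kron (P k \<one>\<^bsub>G\<^esub>) (1\<^sub>m (ms ! k))) [0..<length ds]) = block_sizes ds ms"
    unfolding block_sizes_def by auto
  moreover have "adj W * kron (V \<one>\<^bsub>G\<^esub>) (cconj (U \<one>\<^bsub>G\<^esub>)) * W \<in> carrier_mat (dK * dH) (dK * dH)"
    using W rep_tensor_carrier[OF U V one] by auto
  hence "dim_row (diag_block_mat (map (\<lambda>k. kron (P k \<one>\<^bsub>G\<^esub>) (1\<^sub>m (ms ! k))) [0..<length ds])) = dK * dH"
    using W_dec one by auto
  ultimately show ?thesis unfolding dim_diag_block_mat by simp
qed

theorem theorem4:
  fixes G :: "('g, 'b) monoid_scheme"
    and dH dK :: nat
    and U V :: "'g \<Rightarrow> complex mat"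
    and K0 R Q X W :: "complex mat"
    and ds ms :: "nat list"
    and P :: "nat \<Rightarrow> 'g \<Rightarrow> complex mat"
  defines "N \<equiv> dK * dH"
    and "A' \<equiv> commutant G dK dH V U"
    and "C \<equiv> C_set G dK dH V U K0"
  assumes grp: "group G"
    and repU: "unitary_rep G dH U"
    and repV: "unitary_rep G dK V"
    (* decomposition of K (x) H into isotypic components H_k (x) C^{m_k} *)
    and len: "length ms = length ds"
    and mult_pos: "\<forall>k < length ds. ms ! k > 0"
    and irr: "\<forall>k < length ds. irreducible_rep G (ds ! k) (P k)"
    and ineq: "\<forall>k < length ds. \<forall>l < length ds. k \<noteq> l \<longrightarrow>
                 \<not> equivalent_rep G (ds ! k) (P k) (ds ! l) (P l)"
    and W_unit: "unitary_mat N W"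
    and W_dec: "\<forall>g \<in> carrier G. adj W * kron (V g) (cconj (U g)) * W =
                  diag_block_mat (map (\<lambda>k. kron (P k g) (1\<^sub>m (ms ! k))) [0..<length ds])"
    (* the stated structure of the commutant *)
    and comm_char: "A' = {W * block_op ds Ms * adj W | Ms. length Ms = length ds \<and>
                      (\<forall>k < length ds. Ms ! k \<in> carrier_mat (ms ! k) (ms ! k))}"
    (* K0 and R *)
    and K0: "psd dH K0" "psd dH (1\<^sub>m dH - K0)"
    and R: "R \<in> C"
    and QX: "Q \<in> A'" "X \<in> A'" "psd N Q" "rng_mat N X = supp_mat N Q"
    and RQX: "R = adj X * Q * X"
  shows "(\<forall>T \<in> carrier_mat N N. perturbation C R T \<longleftrightarrow>
            (hermitian_mat N T \<and> T \<in> A' \<and> ptrace_K dK dH T = 0\<^sub>m dH dH \<and>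
             (\<exists>Op. hermitian_mat N Op \<and> Op \<in> A' \<and> Op \<noteq> 0\<^sub>m N N \<and>
                  supp_mat N Op \<subseteq> rng_mat N X \<and> T = adj X * Op * X)))
       \<and> (\<forall>Op Xs. hermitian_mat N Op \<and> Op \<in> A' \<and> Op \<noteq> 0\<^sub>m N N \<and> supp_mat N Op \<subseteq> rng_mat N X
             \<and> length Xs = length ds \<and> (\<forall>k < length ds. Xs ! k \<in> carrier_mat (ms ! k) (ms ! k))
             \<and> X = W * block_op ds Xs * adj W
           \<longrightarrow> (\<exists>Os. length Os = length ds \<and>
                  (\<forall>k < length ds. Os ! k \<in> carrier_mat (ms ! k) (ms ! k)) \<and>
                  Op = W * block_op ds Os * adj W \<and>
                  (\<forall>k < length ds. supp_mat (ms ! k) (Os ! k) \<subseteq> rng_mat (ms ! k) (Xs ! k))))"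
proof -
  have n: "N = dK * dH" and C': "C = {R \<in> A'. psd N R \<and> ptrace_K dK dH R = K0}"
    unfolding \<open>N \<equiv> dK * dH\<close> \<open>C \<equiv> C_set G dK dH V U K0\<close> \<open>A' \<equiv> commutant G dK dH V U\<close> C_set_def
    by simp_all
  have W: "W \<in> carrier_mat N N" using W_unit unfolding unitary_mat_def by auto
  have dpos: "\<forall>k<length ds. ds ! k > 0" using irr unfolding irreducible_rep_def by auto
  have SN: "sum_list (block_sizes ds ms) = N"
    using sum_block_sizes[OF grp repU repV _ irr W_dec] W n by simp
  have blocks: "A' = {W * block_op ds Ms * adj W | Ms. block_shaped ds ms Ms}"
    using comm_char unfolding block_shaped_def .
  interpret ginv_star_algebra N A'
    using commutant_ginv_star_algebra[OF repU repV _ _ blocks[unfolded \<open>A' \<equiv> _\<close>]] W SN n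
    unfolding \<open>A' \<equiv> _\<close> by simp
  have block_supp: "\<exists>Os. block_shaped ds ms Os \<and> Op = W * block_op ds Os * adj W \<and>
      (\<forall>k < length ds. supp_mat (ms ! k) (Os ! k) \<subseteq> rng_mat (ms ! k) (Xs ! k))"
    if "Op \<in> A'" "hermitian_mat N Op" "supp_mat N Op \<subseteq> rng_mat N X" "block_shaped ds ms Xs"
      "X = W * block_op ds Xs * adj W" for Op Xs
    using that blocks block_supp_subset_rng[OF W_unit SN dpos] by blast
  show ?thesis
    using perturbation_iff_sandwich[OF n C' R QX(2-4) RQX] block_supp unfolding block_shaped_def by blast
qed

end
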